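(* Let $A$ be a partial ring, $X=X_A$ with sheaf $\mathcal{O}_X$, and $x=\mathfrak{p}\in X_A$. Then the stalk $\mathcal{O}_{X,x}$ of $\mathcal{O}_X$ at $x$ coincides with the localization $A_{\mathfrak{p}}$.
   Context: A partial ring is a set $A$ with $0$, a set $A_2\subseteq A\times A$ of summable pairs and a partial addition $+\colon A_2\to A$ (with $0$ a unit summable with everything, commutative, and associative in the sense: $(a,b),(a+b,c)\in A_2$ iff $(b,c),(a,b+c)\in A_2$, and then $(a+b)+c=a+(b+c)$), together with a commutative associative multiplication with unit $1$ such that $0\cdot a=0$ and $(a_1,a_2)\in A_2\Rightarrow(a_1x,a_2x)\in A_2$, $(a_1+a_2)x=a_1x+a_2x$. Ideals and prime ideals are defined as for rings (an ideal is a subset $I\ni 0$ closed under sums of summable pairs of its elements and with $AI\subseteq I$; prime: $I\ne A$ and $ab\in I\Rightarrow a\in I$ or $b\in I$). For a multiplicative subset $S$ (containing $1$, closed under products), $S^{-1}A$ is the set of classes $a/s$ ($a\in A,s\in S$) with $a/s=b/t$ iff $uta=usb$ for some $u\in S$, multiplication $\frac{a}{s}\frac{b}{t}=\frac{ab}{st}$, and $(a/s,b/t)$ summable iff $(uta,usb)\in A_2$ for some $u\in S$; $A_{\mathfrak p}=(A\setminus\mathfrak p)^{-1}A$. $X_A$ is the set of prime ideals with the topology generated by $D(a)=\{\mathfrak p: a\notin\mathfrak p\}$. For an open $U\subseteq X_A$, $S_U=\{a\in A: a\notin\mathfrak p\text{ for all }\mathfrak p\in U\}$; $U\mapsto S_U^{-1}A$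 is a presheaf of partial rings $\mathcal{O}'_X$, and $\mathcal{O}_X$ is its sheafification. *)

theory Defs
  imports "HOL-Analysis.Analysis"
begin

record 'a pring =
  pcarrier :: "'a set"
  pzero :: 'a
  pone :: 'a
  psummable :: "'a \<Rightarrow> 'a \<Rightarrow> bool"
  padd :: "'a \<Rightarrow> 'a \<Rightarrow> 'a"
  pmul :: "'a \<Rightarrow> 'a \<Rightarrow> 'a"

definition partial_ring :: "'a pring \<Rightarrow> bool" where
  "partial_ring R \<longleftrightarrow>
     pzero R \<in> pcarrier R \<and> pone R \<in> pcarrier R
   \<and> (\<forall>a b. psummable R a b \<longrightarrow> a \<in> pcarrier R \<and> b \<in> pcarrier R \<and> padd R a b \<in> pcarrier R)
   \<and> (\<forall>a\<in>pcarrier R. \<forall>b\<in>pcarrier R. pmul R a b \<in> pcarrier R)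
   \<and> (\<forall>a\<in>pcarrier R. psummable R (pzero R) a \<and> padd R (pzero R) a = a)
   \<and> (\<forall>a b. psummable R a b \<longrightarrow> psummable R b a \<and> padd R a b = padd R b a)
   \<and> (\<forall>a\<in>pcarrier R. \<forall>b\<in>pcarrier R. \<forall>c\<in>pcarrier R.
        ((psummable R a b \<and> psummable R (padd R a b) c) \<longleftrightarrow>
         (psummable R b c \<and> psummable R a (padd R b c)))
      \<and> (psummable R a b \<and> psummable R (padd R a b) c \<longrightarrow>
         padd R (padd R a b) c = padd R a (padd R b c)))
   \<and> (\<forall>a\<in>pcarrier R. \<forall>b\<in>pcarrier R. pmul R a b = pmul R b a)
   \<and> (\<forall>a\<in>pcarrier R. \<forall>b\<in>pcarrier R. \<forall>c\<in>pcarrier R.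
        pmul R (pmul R a b) c = pmul R a (pmul R b c))
   \<and> (\<forall>a\<in>pcarrier R. pmul R (pone R) a = a)
   \<and> (\<forall>a\<in>pcarrier R. pmul R (pzero R) a = pzero R)
   \<and> (\<forall>a1 a2. \<forall>x\<in>pcarrier R. psummable R a1 a2 \<longrightarrow>
        psummable R (pmul R a1 x) (pmul R a2 x)
      \<and> pmul R (padd R a1 a2) x = padd R (pmul R a1 x) (pmul R a2 x))"

definition pring_hom :: "'a pring \<Rightarrow> 'b pring \<Rightarrow> ('a \<Rightarrow> 'b) \<Rightarrow> bool" where
  "pring_hom R R' f \<longleftrightarrow>
     f ` pcarrier R \<subseteq> pcarrier R'
   \<and> f (pzero R) = pzero R' \<and> f (pone R) = pone R'
   \<and> (\<forall>a\<in>pcarrier R. \<forall>b\<in>pcarrier R. f (pmul R a b) = pmul R' (f a) (f b))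
   \<and> (\<forall>a b. psummable R a b \<longrightarrow>
        psummable R' (f a) (f b) \<and> f (padd R a b) = padd R' (f a) (f b))"

definition pring_iso :: "'a pring \<Rightarrow> 'b pring \<Rightarrow> ('a \<Rightarrow> 'b) \<Rightarrow> bool" where
  "pring_iso R R' f \<longleftrightarrow>
     pring_hom R R' f \<and> bij_betw f (pcarrier R) (pcarrier R')
   \<and> (\<forall>a\<in>pcarrier R. \<forall>b\<in>pcarrier R. psummable R' (f a) (f b) \<longrightarrow> psummable R a b)"

definition pideal :: "'a pring \<Rightarrow> 'a set \<Rightarrow> bool" where
  "pideal R I \<longleftrightarrow> I \<subseteq> pcarrier R \<and> pzero R \<in> I
   \<and> (\<forall>a\<in>I. \<forall>b\<in>I. psummable R a b \<longrightarrow> padd R a b \<in> I)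
   \<and> (\<forall>a\<in>pcarrier R. \<forall>i\<in>I. pmul R a i \<in> I)"

definition pprime :: "'a pring \<Rightarrow> 'a set \<Rightarrow> bool" where
  "pprime R P \<longleftrightarrow> pideal R P \<and> P \<noteq> pcarrier R
   \<and> (\<forall>a\<in>pcarrier R. \<forall>b\<in>pcarrier R. pmul R a b \<in> P \<longrightarrow> a \<in> P \<or> b \<in> P)"

definition spec :: "'a pring \<Rightarrow> 'a set set" where
  "spec R = {P. pprime R P}"

definition basic_open :: "'a pring \<Rightarrow> 'a \<Rightarrow> 'a set set" where
  "basic_open R a = {P \<in> spec R. a \<notin> P}"

definition zariski :: "'a pring \<Rightarrow> 'a set topology" where
  "zariski R = topology_generated_by (basic_open R ` pcarrier R)"

definition loc_rel :: "'a pring \<Rightarrow> 'a set \<Rightarrow> (('a \<times> 'a) \<times> ('a \<times> 'a)) set" where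
  "loc_rel R S = {((a, s), (b, t)). a \<in> pcarrier R \<and> s \<in> S \<and> b \<in> pcarrier R \<and> t \<in> S
      \<and> (\<exists>u\<in>S. pmul R u (pmul R t a) = pmul R u (pmul R s b))}"

definition frac :: "'a pring \<Rightarrow> 'a set \<Rightarrow> 'a \<Rightarrow> 'a \<Rightarrow> ('a \<times> 'a) set" where
  "frac R S a s = loc_rel R S `` {(a, s)}"

definition localization :: "'a pring \<Rightarrow> 'a set \<Rightarrow> ('a \<times> 'a) set pring" where
  "localization R S = \<lparr>
     pcarrier = {frac R S a s | a s. a \<in> pcarrier R \<and> s \<in> S},
     pzero = frac R S (pzero R) (pone R),
     pone = frac R S (pone R) (pone R),
     psummable = (\<lambda>X Y. \<exists>a s b t u. X = frac R S a s \<and> Y = frac R S b t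
        \<and> a \<in> pcarrier R \<and> s \<in> S \<and> b \<in> pcarrier R \<and> t \<in> S \<and> u \<in> S
        \<and> psummable R (pmul R u (pmul R t a)) (pmul R u (pmul R s b))),
     padd = (\<lambda>X Y. SOME Z. \<exists>a s b t u. X = frac R S a s \<and> Y = frac R S b t
        \<and> a \<in> pcarrier R \<and> s \<in> S \<and> b \<in> pcarrier R \<and> t \<in> S \<and> u \<in> S
        \<and> psummable R (pmul R u (pmul R t a)) (pmul R u (pmul R s b))
        \<and> Z = frac R S (padd R (pmul R u (pmul R t a)) (pmul R u (pmul R s b)))
                        (pmul R u (pmul R s t))),
     pmul = (\<lambda>X Y. SOME Z. \<exists>a s b t. X = frac R S a s \<and> Y = frac R S b t
        \<and> a \<in> pcarrier R \<and> s \<in> S \<and> b \<in> pcarrier R \<and> t \<in> S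
        \<and> Z = frac R S (pmul R a b) (pmul R s t)) \<rparr>"

text \<open>A presheaf of partial rings on a topology T is given by its rings of sections
  F U (for open U) and restriction maps res U V (for V \<subseteq> U).\<close>

definition germ_rel :: "'o topology \<Rightarrow> ('o set \<Rightarrow> 'e pring) \<Rightarrow> ('o set \<Rightarrow> 'o set \<Rightarrow> 'e \<Rightarrow> 'e)
    \<Rightarrow> 'o \<Rightarrow> (('o set \<times> 'e) \<times> ('o set \<times> 'e)) set" where
  "germ_rel T F res x = {((U, s), (V, t)).
      openin T U \<and> x \<in> U \<and> s \<in> pcarrier (F U) \<and> openin T V \<and> x \<in> V \<and> t \<in> pcarrier (F V)
    \<and> (\<exists>W. openin T W \<and> x \<in> W \<and> W \<subseteq> U \<inter> V \<and> res U W s = res V W t)}"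

definition germ :: "'o topology \<Rightarrow> ('o set \<Rightarrow> 'e pring) \<Rightarrow> ('o set \<Rightarrow> 'o set \<Rightarrow> 'e \<Rightarrow> 'e)
    \<Rightarrow> 'o \<Rightarrow> 'o set \<Rightarrow> 'e \<Rightarrow> ('o set \<times> 'e) set" where
  "germ T F res x U s = germ_rel T F res x `` {(U, s)}"

definition stalk :: "'o topology \<Rightarrow> ('o set \<Rightarrow> 'e pring) \<Rightarrow> ('o set \<Rightarrow> 'o set \<Rightarrow> 'e \<Rightarrow> 'e)
    \<Rightarrow> 'o \<Rightarrow> ('o set \<times> 'e) set pring" where
  "stalk T F res x = \<lparr>
     pcarrier = {germ T F res x U s | U s. openin T U \<and> x \<in> U \<and> s \<in> pcarrier (F U)},
     pzero = germ T F res x (topspace T) (pzero (F (topspace T))),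
     pone = germ T F res x (topspace T) (pone (F (topspace T))),
     psummable = (\<lambda>G H. \<exists>U s V t W. G = germ T F res x U s \<and> H = germ T F res x V t
        \<and> openin T U \<and> x \<in> U \<and> s \<in> pcarrier (F U) \<and> openin T V \<and> x \<in> V \<and> t \<in> pcarrier (F V)
        \<and> openin T W \<and> x \<in> W \<and> W \<subseteq> U \<inter> V
        \<and> psummable (F W) (res U W s) (res V W t)),
     padd = (\<lambda>G H. SOME K. \<exists>U s V t W. G = germ T F res x U s \<and> H = germ T F res x V t
        \<and> openin T U \<and> x \<in> U \<and> s \<in> pcarrier (F U) \<and> openin T V \<and> x \<in> V \<and> t \<in> pcarrier (F V)
        \<and> openin T W \<and> x \<in> W \<and> W \<subseteq> U \<inter> V
        \<and> psummable (F W) (res U W s) (res V W t)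
        \<and> K = germ T F res x W (padd (F W) (res U W s) (res V W t))),
     pmul = (\<lambda>G H. SOME K. \<exists>U s V t. G = germ T F res x U s \<and> H = germ T F res x V t
        \<and> openin T U \<and> x \<in> U \<and> s \<in> pcarrier (F U) \<and> openin T V \<and> x \<in> V \<and> t \<in> pcarrier (F V)
        \<and> K = germ T F res x (U \<inter> V) (pmul (F (U \<inter> V)) (res U (U \<inter> V) s) (res V (U \<inter> V) t))) \<rparr>"

text \<open>Outside U sections are fixed to the empty set.\<close>

definition sheafify :: "'o topology \<Rightarrow> ('o set \<Rightarrow> 'e pring) \<Rightarrow> ('o set \<Rightarrow> 'o set \<Rightarrow> 'e \<Rightarrow> 'e)
    \<Rightarrow> 'o set \<Rightarrow> ('o \<Rightarrow> ('o set \<times> 'e) set) pring" where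
  "sheafify T F res U = \<lparr>
     pcarrier = {\<sigma>. (\<forall>q. q \<notin> U \<longrightarrow> \<sigma> q = {})
        \<and> (\<forall>q\<in>U. \<exists>V t. openin T V \<and> q \<in> V \<and> V \<subseteq> U \<and> t \<in> pcarrier (F V)
               \<and> (\<forall>r\<in>V. \<sigma> r = germ T F res r V t))},
     pzero = (\<lambda>q. if q \<in> U then pzero (stalk T F res q) else {}),
     pone = (\<lambda>q. if q \<in> U then pone (stalk T F res q) else {}),
     psummable = (\<lambda>\<sigma> \<tau>. \<forall>q\<in>U. psummable (stalk T F res q) (\<sigma> q) (\<tau> q)),
     padd = (\<lambda>\<sigma> \<tau> q. if q \<in> U then padd (stalk T F res q) (\<sigma> q) (\<tau> q) else {}),
     pmul = (\<lambda>\<sigma> \<tau> q. if q \<in> U then pmul (stalk T F res q) (\<sigma> q) (\<tau> q) else {}) \<rparr>"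

definition sheafify_res :: "'o set \<Rightarrow> 'o set \<Rightarrow> ('o \<Rightarrow> 'g set) \<Rightarrow> ('o \<Rightarrow> 'g set)" where
  "sheafify_res U V \<sigma> = (\<lambda>q. if q \<in> V then \<sigma> q else {})"

definition S_open :: "'a pring \<Rightarrow> 'a set set \<Rightarrow> 'a set" where
  "S_open R U = {a \<in> pcarrier R. \<forall>P\<in>U. a \<notin> P}"

definition struct_presheaf :: "'a pring \<Rightarrow> 'a set set \<Rightarrow> ('a \<times> 'a) set pring" where
  "struct_presheaf R U = localization R (S_open R U)"

text \<open>Restriction O'(U) \<rightarrow> O'(V): the class of a/s w.r.t. S_U goes to the class of a/s
  w.r.t. S_V.\<close>
definition struct_presheaf_res :: "'a pring \<Rightarrow> 'a set set \<Rightarrow> 'a set set \<Rightarrow> ('a \<times> 'a) set \<Rightarrow> ('a \<times> 'a) set" where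
  "struct_presheaf_res R U V c = loc_rel R (S_open R V) `` c"

definition struct_sheaf where
  "struct_sheaf R = sheafify (zariski R) (struct_presheaf R) (struct_presheaf_res R)"

definition struct_stalk where
  "struct_stalk R x = stalk (zariski R) (struct_sheaf R) sheafify_res x"

end

(* A family of homomorphisms h U : F(U) -> B, for the open neighbourhoods U of x, that is
   compatible with restriction induces a homomorphism out of the stalk F_x. It is an isomorphism
   as soon as the family is jointly surjective and every equation or summable pair in B between
   values of h is already witnessed by restrictions to a smaller neighbourhood of x.

   Evaluation at x is such a family from the sheafification of F to F_x, because sections of the
   sheafification are locally germs of sections of F; so sheafifying does not change stalks.
   For the structure presheaf O'(U) = S_U^-1 A and p in U, the maps S_U^-1 A -> A_p form such a
   family: an element u outside p witnessing an equation or a summable pair in A_p lies in S_W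
   for the neighbourhood W = U \<inter> D(u) of p. Composing the two isomorphisms and inverting gives
   O_X,p ~= A_p. *)

theory Submission
  imports Defs
begin

section \<open>Isomorphisms of partial rings\<close>

(* Weaker than the closure conditions of partial_ring: a sum is only required to exist for
   summable pairs from the carrier, since summability in a sheafification is a pointwise
   condition on arbitrary functions. *)
definition pring_closed :: "'a pring \<Rightarrow> bool" where
  "pring_closed R \<longleftrightarrow> pzero R \<in> pcarrier R \<and> pone R \<in> pcarrier R
   \<and> (\<forall>a\<in>pcarrier R. \<forall>b\<in>pcarrier R. pmul R a b \<in> pcarrier R)
   \<and> (\<forall>a\<in>pcarrier R. \<forall>b\<in>pcarrier R. psummable R a b \<longrightarrow> padd R a b \<in> pcarrier R)"

lemma pring_homD:
  assumes "pring_hom R R' f"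
  shows "a \<in> pcarrier R \<Longrightarrow> f a \<in> pcarrier R'"
    and "f (pzero R) = pzero R'" and "f (pone R) = pone R'"
    and "a \<in> pcarrier R \<Longrightarrow> b \<in> pcarrier R \<Longrightarrow> f (pmul R a b) = pmul R' (f a) (f b)"
    and "psummable R a b \<Longrightarrow> psummable R' (f a) (f b)"
    and "psummable R a b \<Longrightarrow> f (padd R a b) = padd R' (f a) (f b)"
  using assms unfolding pring_hom_def by auto

lemma pring_iso_comp:
  assumes f: "pring_iso R R' f" and g: "pring_iso R' R'' g"
  shows "pring_iso R R'' (g \<circ> f)"
proof -
  have hf: "pring_hom R R' f" and hg: "pring_hom R' R'' g"
    using f g unfolding pring_iso_def by auto
  have "pring_hom R R'' (g \<circ> f)"
    unfolding pring_hom_def using pring_homD[OF hf] pring_homD[OF hg] by auto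
  moreover have "bij_betw (g \<circ> f) (pcarrier R) (pcarrier R'')"
    using f g unfolding pring_iso_def by (auto intro: bij_betw_trans)
  moreover have "psummable R a b"
    if "a \<in> pcarrier R" "b \<in> pcarrier R" "psummable R'' (g (f a)) (g (f b))" for a b
    using that f g pring_homD(1)[OF hf] unfolding pring_iso_def by blast
  ultimately show ?thesis unfolding pring_iso_def by auto
qed

lemma pring_iso_inv:
  assumes iso: "pring_iso R R' f" and closed: "pring_closed R"
    and summable_carrier: "\<And>a b. psummable R' a b \<Longrightarrow> a \<in> pcarrier R' \<and> b \<in> pcarrier R'"
  shows "pring_iso R' R (inv_into (pcarrier R) f)"
proof -
  let ?g = "inv_into (pcarrier R) f"
  have hom: "pring_hom R R' f" and bij: "bij_betw f (pcarrier R) (pcarrier R')"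
    and reflect: "\<And>a b. a \<in> pcarrier R \<Longrightarrow> b \<in> pcarrier R \<Longrightarrow> psummable R' (f a) (f b) \<Longrightarrow> psummable R a b"
    using iso unfolding pring_iso_def by auto
  have inj: "inj_on f (pcarrier R)" using bij bij_betw_def by blast
  have g_in: "?g a' \<in> pcarrier R" and f_g: "f (?g a') = a'" if "a' \<in> pcarrier R'" for a'
    using that bij by (auto simp: bij_betw_inv_into_right inv_into_into bij_betw_def)
  have g_f: "?g (f a) = a" if "a \<in> pcarrier R" for a
    using inv_into_f_f[OF inj that] .
  have g_eqI: "?g a' = a" if "a \<in> pcarrier R" "f a = a'" for a a'
    using g_f that by blast
  have cl: "pzero R \<in> pcarrier R" "pone R \<in> pcarrier R"
    "\<And>a b. a \<in> pcarrier R \<Longrightarrow> b \<in> pcarrier R \<Longrightarrow> pmul R a b \<in> pcarrier R"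
    "\<And>a b. a \<in> pcarrier R \<Longrightarrow> b \<in> pcarrier R \<Longrightarrow> psummable R a b \<Longrightarrow> padd R a b \<in> pcarrier R"
    using closed unfolding pring_closed_def by auto
  have "pring_hom R' R ?g"
    unfolding pring_hom_def
  proof (intro conjI ballI allI impI subsetI)
    show "b \<in> pcarrier R" if "b \<in> ?g ` pcarrier R'" for b using that g_in by blast
    show "?g (pzero R') = pzero R" using g_eqI[OF cl(1)] pring_homD(2)[OF hom] by simp
    show "?g (pone R') = pone R" using g_eqI[OF cl(2)] pring_homD(3)[OF hom] by simp
    show "?g (pmul R' a' b') = pmul R (?g a') (?g b')" if "a' \<in> pcarrier R'" "b' \<in> pcarrier R'" for a' b'
      using that by (intro g_eqI cl(3) g_in) (simp_all add: pring_homD(4)[OF hom] g_in f_g)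
  next
    fix a' b' assume s: "psummable R' a' b'"
    then have in': "a' \<in> pcarrier R'" "b' \<in> pcarrier R'" using summable_carrier by auto
    show "psummable R (?g a') (?g b')"
      using reflect[OF g_in g_in] s in' by (simp add: f_g)
    then show "?g (padd R' a' b') = padd R (?g a') (?g b')"
      using in' by (intro g_eqI cl(4) g_in) (simp_all add: pring_homD(6)[OF hom] g_in f_g)
  qed
  moreover have "bij_betw ?g (pcarrier R') (pcarrier R)"
    using bij by (rule bij_betw_inv_into)
  moreover have "psummable R' a' b'"
    if "a' \<in> pcarrier R'" "b' \<in> pcarrier R'" "psummable R (?g a') (?g b')" for a' b'
    using pring_homD(5)[OF hom that(3)] that(1,2) by (simp add: f_g)
  ultimately show ?thesis unfolding pring_iso_def by blast
qed

section \<open>Stalks of presheaves of partial rings\<close>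

locale pring_presheaf =
  fixes T :: "'o topology" and F :: "'o set \<Rightarrow> 'e pring"
    and res :: "'o set \<Rightarrow> 'o set \<Rightarrow> 'e \<Rightarrow> 'e"
  assumes closed: "openin T U \<Longrightarrow> pring_closed (F U)"
    and res_hom: "openin T U \<Longrightarrow> openin T V \<Longrightarrow> V \<subseteq> U \<Longrightarrow> pring_hom (F U) (F V) (res U V)"
    and res_res: "openin T U \<Longrightarrow> openin T V \<Longrightarrow> openin T W \<Longrightarrow> W \<subseteq> V \<Longrightarrow> V \<subseteq> U
      \<Longrightarrow> s \<in> pcarrier (F U) \<Longrightarrow> res V W (res U V s) = res U W s"
begin

lemma res_carrier: "openin T U \<Longrightarrow> openin T V \<Longrightarrow> V \<subseteq> U \<Longrightarrow> s \<in> pcarrier (F U)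
    \<Longrightarrow> res U V s \<in> pcarrier (F V)"
  using pring_homD(1)[OF res_hom] .

lemma closedD:
  assumes "openin T U"
  shows "pzero (F U) \<in> pcarrier (F U)" "pone (F U) \<in> pcarrier (F U)"
    and "a \<in> pcarrier (F U) \<Longrightarrow> b \<in> pcarrier (F U) \<Longrightarrow> pmul (F U) a b \<in> pcarrier (F U)"
    and "a \<in> pcarrier (F U) \<Longrightarrow> b \<in> pcarrier (F U) \<Longrightarrow> psummable (F U) a b
      \<Longrightarrow> padd (F U) a b \<in> pcarrier (F U)"
  using closed[OF assms] unfolding pring_closed_def by auto

lemma res_eq_shrink:
  assumes "openin T U" "openin T V" "openin T W" "openin T W'" "W' \<subseteq> W" "W \<subseteq> U \<inter> V"
    and "s \<in> pcarrier (F U)" "t \<in> pcarrier (F V)" and "res U W s = res V W t"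
  shows "res U W' s = res V W' t"
  using assms res_res[of U W W' s] res_res[of V W W' t] by auto

lemma germ_rel_iff:
  "((U, s), (V, t)) \<in> germ_rel T F res x \<longleftrightarrow>
      openin T U \<and> x \<in> U \<and> s \<in> pcarrier (F U) \<and> openin T V \<and> x \<in> V \<and> t \<in> pcarrier (F V)
    \<and> (\<exists>W. openin T W \<and> x \<in> W \<and> W \<subseteq> U \<inter> V \<and> res U W s = res V W t)"
  unfolding germ_rel_def by simp

lemma germ_rel_equiv:
  "equiv {(U, s). openin T U \<and> x \<in> U \<and> s \<in> pcarrier (F U)} (germ_rel T F res x)"
proof (rule equivI)
  show "germ_rel T F res x \<subseteq> {(U, s). openin T U \<and> x \<in> U \<and> s \<in> pcarrier (F U)}
      \<times> {(U, s). openin T U \<and> x \<in> U \<and> s \<in> pcarrier (F U)}"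
    unfolding germ_rel_def by blast
  show "refl_on {(U, s). openin T U \<and> x \<in> U \<and> s \<in> pcarrier (F U)} (germ_rel T F res x)"
    by (rule refl_onI) (auto simp: germ_rel_iff)
  show "sym (germ_rel T F res x)"
    unfolding sym_def germ_rel_def by (auto simp: Int_commute)
  show "trans (germ_rel T F res x)"
  proof (rule transI, clarify)
    fix U1 s1 U2 s2 U3 s3
    assume "((U1, s1), (U2, s2)) \<in> germ_rel T F res x" "((U2, s2), (U3, s3)) \<in> germ_rel T F res x"
    then obtain W1 W2 where reps: "openin T U1" "x \<in> U1" "s1 \<in> pcarrier (F U1)"
        "openin T U2" "s2 \<in> pcarrier (F U2)" "openin T U3" "x \<in> U3" "s3 \<in> pcarrier (F U3)"
      and W1: "openin T W1" "x \<in> W1" "W1 \<subseteq> U1 \<inter> U2" "res U1 W1 s1 = res U2 W1 s2"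
      and W2: "openin T W2" "x \<in> W2" "W2 \<subseteq> U2 \<inter> U3" "res U2 W2 s2 = res U3 W2 s3"
      unfolding germ_rel_iff by blast
    have W: "openin T (W1 \<inter> W2)" "W1 \<inter> W2 \<subseteq> W1" "W1 \<inter> W2 \<subseteq> W2"
      using W1 W2 by auto
    have "res U1 (W1 \<inter> W2) s1 = res U2 (W1 \<inter> W2) s2"
      using res_eq_shrink[OF reps(1,4) W1(1) W(1,2) W1(3) reps(3,5) W1(4)] .
    also have "\<dots> = res U3 (W1 \<inter> W2) s3"
      using res_eq_shrink[OF reps(4,6) W2(1) W(1,3) W2(3) reps(5,8) W2(4)] .
    finally show "((U1, s1), (U3, s3)) \<in> germ_rel T F res x"
      unfolding germ_rel_iff using reps W1 W2 W by blast
  qed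
qed

lemma germ_eq_iff:
  assumes "openin T U" "x \<in> U" "s \<in> pcarrier (F U)" "openin T V" "x \<in> V" "t \<in> pcarrier (F V)"
  shows "germ T F res x U s = germ T F res x V t \<longleftrightarrow>
         (\<exists>W. openin T W \<and> x \<in> W \<and> W \<subseteq> U \<inter> V \<and> res U W s = res V W t)"
  unfolding germ_def using eq_equiv_class_iff[OF germ_rel_equiv[of x], of "(U, s)" "(V, t)"] assms
  by (simp add: germ_rel_iff)

lemma germ_restrict:
  assumes "openin T U" "openin T W" "x \<in> W" "W \<subseteq> U" "s \<in> pcarrier (F U)"
  shows "germ T F res x U s = germ T F res x W (res U W s)"
  using assms res_carrier[of U W s] res_res[of U W W s]
  by (subst germ_eq_iff) (auto intro!: exI[of _ W])

lemma germ_eq_near: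
  assumes "openin T U" "x \<in> U" "s \<in> pcarrier (F U)" "openin T V" "x \<in> V" "t \<in> pcarrier (F V)"
    and "germ T F res x U s = germ T F res x V t"
  obtains W where "openin T W" "x \<in> W" "W \<subseteq> U \<inter> V"
    "\<And>y. y \<in> W \<Longrightarrow> germ T F res y U s = germ T F res y V t"
proof -
  obtain W where W: "openin T W" "x \<in> W" "W \<subseteq> U \<inter> V" "res U W s = res V W t"
    using germ_eq_iff[OF assms(1-6)] assms(7) by blast
  have "germ T F res y U s = germ T F res y V t" if "y \<in> W" for y
  proof -
    have "W \<subseteq> U" "W \<subseteq> V" using W(3) by auto
    then show ?thesis
      using germ_restrict[of U W y s] germ_restrict[of V W y t] W(1,4) assms(1,3,4,6) that by simp
  qed
  then show thesis using that W by blast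
qed

lemma stalk_carrier:
  "pcarrier (stalk T F res x)
    = {germ T F res x U s | U s. openin T U \<and> x \<in> U \<and> s \<in> pcarrier (F U)}"
  by (simp add: stalk_def)

lemma germ_in_stalk:
  "openin T U \<Longrightarrow> x \<in> U \<Longrightarrow> s \<in> pcarrier (F U) \<Longrightarrow> germ T F res x U s \<in> pcarrier (stalk T F res x)"
  unfolding stalk_carrier by blast

lemma stalk_carrierE:
  assumes "G \<in> pcarrier (stalk T F res x)"
  obtains U s where "openin T U" "x \<in> U" "s \<in> pcarrier (F U)" "G = germ T F res x U s"
  using assms unfolding stalk_carrier by blast

lemma germ_mul_shrink:
  assumes "openin T U" "openin T V" "openin T W" "x \<in> W" "W \<subseteq> U \<inter> V"
    and "s \<in> pcarrier (F U)" "t \<in> pcarrier (F V)"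
  shows "germ T F res x (U \<inter> V) (pmul (F (U \<inter> V)) (res U (U \<inter> V) s) (res V (U \<inter> V) t))
       = germ T F res x W (pmul (F W) (res U W s) (res V W t))"
proof -
  have UV: "openin T (U \<inter> V)" using assms(1,2) by blast
  have carr: "res U (U \<inter> V) s \<in> pcarrier (F (U \<inter> V))" "res V (U \<inter> V) t \<in> pcarrier (F (U \<inter> V))"
    using res_carrier UV assms by auto
  have "germ T F res x (U \<inter> V) (pmul (F (U \<inter> V)) (res U (U \<inter> V) s) (res V (U \<inter> V) t))
      = germ T F res x W (res (U \<inter> V) W (pmul (F (U \<inter> V)) (res U (U \<inter> V) s) (res V (U \<inter> V) t)))"
    using germ_restrict[OF UV assms(3,4,5)] closedD(3)[OF UV carr] .
  also have "\<dots> = germ T F res x W (pmul (F W) (res U W s) (res V W t))"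
    using pring_homD(4)[OF res_hom[OF UV assms(3,5)] carr] res_res assms UV by auto
  finally show ?thesis .
qed

lemma germ_add_shrink:
  assumes "openin T U" "openin T V" "openin T W" "openin T W'" "x \<in> W'" "W' \<subseteq> W" "W \<subseteq> U \<inter> V"
    and "s \<in> pcarrier (F U)" "t \<in> pcarrier (F V)" "psummable (F W) (res U W s) (res V W t)"
  shows "germ T F res x W (padd (F W) (res U W s) (res V W t))
       = germ T F res x W' (padd (F W') (res U W' s) (res V W' t))"
proof -
  have carr: "res U W s \<in> pcarrier (F W)" "res V W t \<in> pcarrier (F W)"
    using res_carrier assms by auto
  have "germ T F res x W (padd (F W) (res U W s) (res V W t))
      = germ T F res x W' (res W W' (padd (F W) (res U W s) (res V W t)))"
    using germ_restrict[OF assms(3,4,5,6)] closedD(4)[OF assms(3) carr assms(10)] .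
  also have "\<dots> = germ T F res x W' (padd (F W') (res U W' s) (res V W' t))"
    using pring_homD(6)[OF res_hom[OF assms(3,4,6)] assms(10)] res_res assms by auto
  finally show ?thesis .
qed

lemma germ_eq_res_near:
  assumes "openin T U" "x \<in> U" "s \<in> pcarrier (F U)" "openin T U'" "x \<in> U'" "s' \<in> pcarrier (F U')"
    and "germ T F res x U s = germ T F res x U' s'"
  obtains W where "openin T W" "x \<in> W" "W \<subseteq> U \<inter> U'"
    "\<And>W'. openin T W' \<Longrightarrow> W' \<subseteq> W \<Longrightarrow> res U W' s = res U' W' s'"
proof -
  obtain W where W: "openin T W" "x \<in> W" "W \<subseteq> U \<inter> U'" "res U W s = res U' W s'"
    using germ_eq_iff[OF assms(1-6)] assms(7) by blast
  show thesis
    using that[OF W(1-3)] res_eq_shrink[OF assms(1,4) W(1) _ _ W(3) assms(3,6) W(4)] by blast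
qed

lemma stalk_mul_germ:
  assumes U: "openin T U" "x \<in> U" "s \<in> pcarrier (F U)"
    and V: "openin T V" "x \<in> V" "t \<in> pcarrier (F V)"
  shows "pmul (stalk T F res x) (germ T F res x U s) (germ T F res x V t)
       = germ T F res x (U \<inter> V) (pmul (F (U \<inter> V)) (res U (U \<inter> V) s) (res V (U \<inter> V) t))"
  unfolding stalk_def pring.simps
proof (rule some_equality, (intro exI conjI; (rule refl U V)?), elim exE conjE)
  fix K U' s' V' t'
  assume eqs: "germ T F res x U s = germ T F res x U' s'" "germ T F res x V t = germ T F res x V' t'"
    and U': "openin T U'" "x \<in> U'" "s' \<in> pcarrier (F U')"
    and V': "openin T V'" "x \<in> V'" "t' \<in> pcarrier (F V')"
    and K: "K = germ T F res x (U' \<inter> V') (pmul (F (U' \<inter> V')) (res U' (U' \<inter> V') s') (res V' (U' \<inter> V') t'))"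
  obtain W1 where W1: "openin T W1" "x \<in> W1" "W1 \<subseteq> U \<inter> U'"
      "\<And>W'. openin T W' \<Longrightarrow> W' \<subseteq> W1 \<Longrightarrow> res U W' s = res U' W' s'"
    using germ_eq_res_near[OF U U' eqs(1)] by blast
  obtain W2 where W2: "openin T W2" "x \<in> W2" "W2 \<subseteq> V \<inter> V'"
      "\<And>W'. openin T W' \<Longrightarrow> W' \<subseteq> W2 \<Longrightarrow> res V W' t = res V' W' t'"
    using germ_eq_res_near[OF V V' eqs(2)] by blast
  have W: "openin T (W1 \<inter> W2)" "x \<in> W1 \<inter> W2" using W1 W2 by auto
  have "K = germ T F res x (W1 \<inter> W2) (pmul (F (W1 \<inter> W2)) (res U' (W1 \<inter> W2) s') (res V' (W1 \<inter> W2) t'))"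
    using K germ_mul_shrink[OF U'(1) V'(1) W, of s' t'] W1(3) W2(3) U'(3) V'(3) by auto
  also have "\<dots> = germ T F res x (W1 \<inter> W2) (pmul (F (W1 \<inter> W2)) (res U (W1 \<inter> W2) s) (res V (W1 \<inter> W2) t))"
    using W1(4) W2(4) W(1) by simp
  also have "\<dots> = germ T F res x (U \<inter> V) (pmul (F (U \<inter> V)) (res U (U \<inter> V) s) (res V (U \<inter> V) t))"
    using germ_mul_shrink[OF U(1) V(1) W, of s t] W1(3) W2(3) U(3) V(3) by auto
  finally show "K = \<dots>" .
qed

lemma stalk_summable_germ_iff:
  assumes U: "openin T U" "x \<in> U" "s \<in> pcarrier (F U)"
    and V: "openin T V" "x \<in> V" "t \<in> pcarrier (F V)"
  shows "psummable (stalk T F res x) (germ T F res x U s) (germ T F res x V t) \<longleftrightarrow>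
    (\<exists>W. openin T W \<and> x \<in> W \<and> W \<subseteq> U \<inter> V \<and> psummable (F W) (res U W s) (res V W t))"
proof
  assume "psummable (stalk T F res x) (germ T F res x U s) (germ T F res x V t)"
  then obtain U' s' V' t' W where
    eqs: "germ T F res x U s = germ T F res x U' s'" "germ T F res x V t = germ T F res x V' t'"
    and U': "openin T U'" "x \<in> U'" "s' \<in> pcarrier (F U')"
    and V': "openin T V'" "x \<in> V'" "t' \<in> pcarrier (F V')"
    and W: "openin T W" "x \<in> W" "W \<subseteq> U' \<inter> V'" "psummable (F W) (res U' W s') (res V' W t')"
    unfolding stalk_def pring.simps by blast
  obtain W1 where W1: "openin T W1" "x \<in> W1" "W1 \<subseteq> U \<inter> U'"
      "\<And>W'. openin T W' \<Longrightarrow> W' \<subseteq> W1 \<Longrightarrow> res U W' s = res U' W' s'"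
    using germ_eq_res_near[OF U U' eqs(1)] by blast
  obtain W2 where W2: "openin T W2" "x \<in> W2" "W2 \<subseteq> V \<inter> V'"
      "\<And>W'. openin T W' \<Longrightarrow> W' \<subseteq> W2 \<Longrightarrow> res V W' t = res V' W' t'"
    using germ_eq_res_near[OF V V' eqs(2)] by blast
  define W0 where "W0 = W \<inter> W1 \<inter> W2"
  have W0: "openin T W0" "x \<in> W0" "W0 \<subseteq> W" "W0 \<subseteq> U \<inter> V" "W0 \<subseteq> W1" "W0 \<subseteq> W2"
    unfolding W0_def using W W1 W2 by auto
  have "psummable (F W0) (res W W0 (res U' W s')) (res W W0 (res V' W t'))"
    using pring_homD(5)[OF res_hom[OF W(1) W0(1,3)] W(4)] .
  then have "psummable (F W0) (res U' W0 s') (res V' W0 t')"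
    using res_res U' V' W W0 by auto
  then have "psummable (F W0) (res U W0 s) (res V W0 t)"
    using W1(4)[OF W0(1,5)] W2(4)[OF W0(1,6)] by simp
  then show "\<exists>W. openin T W \<and> x \<in> W \<and> W \<subseteq> U \<inter> V \<and> psummable (F W) (res U W s) (res V W t)"
    using W0 by blast
next
  assume "\<exists>W. openin T W \<and> x \<in> W \<and> W \<subseteq> U \<inter> V \<and> psummable (F W) (res U W s) (res V W t)"
  then show "psummable (stalk T F res x) (germ T F res x U s) (germ T F res x V t)"
    unfolding stalk_def pring.simps using U V by blast
qed

lemma stalk_add_germ:
  assumes U: "openin T U" "x \<in> U" "s \<in> pcarrier (F U)"
    and V: "openin T V" "x \<in> V" "t \<in> pcarrier (F V)"
    and W: "openin T W" "x \<in> W" "W \<subseteq> U \<inter> V" "psummable (F W) (res U W s) (res V W t)"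
  shows "padd (stalk T F res x) (germ T F res x U s) (germ T F res x V t)
       = germ T F res x W (padd (F W) (res U W s) (res V W t))"
  unfolding stalk_def pring.simps
proof (rule some_equality, (intro exI conjI; (rule refl U V W)?), elim exE conjE)
  fix K U' s' V' t' W'
  assume eqs: "germ T F res x U s = germ T F res x U' s'" "germ T F res x V t = germ T F res x V' t'"
    and U': "openin T U'" "x \<in> U'" "s' \<in> pcarrier (F U')"
    and V': "openin T V'" "x \<in> V'" "t' \<in> pcarrier (F V')"
    and W': "openin T W'" "x \<in> W'" "W' \<subseteq> U' \<inter> V'" "psummable (F W') (res U' W' s') (res V' W' t')"
    and K: "K = germ T F res x W' (padd (F W') (res U' W' s') (res V' W' t'))"
  obtain W1 where W1: "openin T W1" "x \<in> W1" "W1 \<subseteq> U \<inter> U'"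
      "\<And>W'. openin T W' \<Longrightarrow> W' \<subseteq> W1 \<Longrightarrow> res U W' s = res U' W' s'"
    using germ_eq_res_near[OF U U' eqs(1)] by blast
  obtain W2 where W2: "openin T W2" "x \<in> W2" "W2 \<subseteq> V \<inter> V'"
      "\<And>W'. openin T W' \<Longrightarrow> W' \<subseteq> W2 \<Longrightarrow> res V W' t = res V' W' t'"
    using germ_eq_res_near[OF V V' eqs(2)] by blast
  define W0 where "W0 = W \<inter> W' \<inter> W1 \<inter> W2"
  have W0: "openin T W0" "x \<in> W0" "W0 \<subseteq> W" "W0 \<subseteq> W'" "W0 \<subseteq> W1" "W0 \<subseteq> W2"
    unfolding W0_def using W W' W1 W2 by auto
  have "K = germ T F res x W0 (padd (F W0) (res U' W0 s') (res V' W0 t'))"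
    using K germ_add_shrink[OF U'(1) V'(1) W'(1) W0(1,2,4) W'(3) U'(3) V'(3) W'(4)] by simp
  also have "\<dots> = germ T F res x W0 (padd (F W0) (res U W0 s) (res V W0 t))"
    using W1(4)[OF W0(1,5)] W2(4)[OF W0(1,6)] by simp
  also have "\<dots> = germ T F res x W (padd (F W) (res U W s) (res V W t))"
    using germ_add_shrink[OF U(1) V(1) W(1) W0(1,2,3) W(3) U(3) V(3) W(4)] by simp
  finally show "K = \<dots>" .
qed

lemma stalk_summableE:
  assumes "psummable (stalk T F res x) G H"
  obtains U s V t W where "openin T U" "x \<in> U" "s \<in> pcarrier (F U)"
    "openin T V" "x \<in> V" "t \<in> pcarrier (F V)" "G = germ T F res x U s" "H = germ T F res x V t"
    "openin T W" "x \<in> W" "W \<subseteq> U \<inter> V" "psummable (F W) (res U W s) (res V W t)"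
  using assms unfolding stalk_def pring.simps by blast

lemma stalk_zero: "pzero (stalk T F res x) = germ T F res x (topspace T) (pzero (F (topspace T)))"
  and stalk_one: "pone (stalk T F res x) = germ T F res x (topspace T) (pone (F (topspace T)))"
  by (simp_all add: stalk_def)

lemma stalk_closed:
  assumes "x \<in> topspace T"
  shows "pring_closed (stalk T F res x)"
  unfolding pring_closed_def
proof (intro conjI ballI impI)
  show "pzero (stalk T F res x) \<in> pcarrier (stalk T F res x)"
    "pone (stalk T F res x) \<in> pcarrier (stalk T F res x)"
    unfolding stalk_zero stalk_one using germ_in_stalk closedD(1,2) assms by auto
next
  fix G H assume "G \<in> pcarrier (stalk T F res x)" "H \<in> pcarrier (stalk T F res x)"
  then obtain U s V t where U: "openin T U" "x \<in> U" "s \<in> pcarrier (F U)"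
    and V: "openin T V" "x \<in> V" "t \<in> pcarrier (F V)"
    and GH: "G = germ T F res x U s" "H = germ T F res x V t"
    by (elim stalk_carrierE)
  have UV: "openin T (U \<inter> V)" "x \<in> U \<inter> V" using U V by auto
  show "pmul (stalk T F res x) G H \<in> pcarrier (stalk T F res x)"
    unfolding GH stalk_mul_germ[OF U V]
    using germ_in_stalk[OF UV] closedD(3)[OF UV(1)] res_carrier U V UV by auto
  assume "psummable (stalk T F res x) G H"
  then obtain W where W: "openin T W" "x \<in> W" "W \<subseteq> U \<inter> V" "psummable (F W) (res U W s) (res V W t)"
    unfolding GH stalk_summable_germ_iff[OF U V] by blast
  show "padd (stalk T F res x) G H \<in> pcarrier (stalk T F res x)"
    unfolding GH stalk_add_germ[OF U V W]
    using germ_in_stalk[OF W(1,2)] closedD(4)[OF W(1) _ _ W(4)] res_carrier U V W by auto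
qed

end

definition germ_lift :: "('o set \<Rightarrow> 'e \<Rightarrow> 'b) \<Rightarrow> ('o set \<times> 'e) set \<Rightarrow> 'b" where
  "germ_lift h G = (SOME b. \<exists>U s. (U, s) \<in> G \<and> b = h U s)"

locale pring_presheaf_cocone = pring_presheaf T F res
  for T :: "'o topology" and F :: "'o set \<Rightarrow> 'e pring" and res +
  fixes x :: 'o and B :: "'b pring" and h :: "'o set \<Rightarrow> 'e \<Rightarrow> 'b"
  assumes point: "x \<in> topspace T"
    and cocone_hom: "openin T U \<Longrightarrow> x \<in> U \<Longrightarrow> pring_hom (F U) B (h U)"
    and cocone_res: "openin T U \<Longrightarrow> openin T W \<Longrightarrow> x \<in> W \<Longrightarrow> W \<subseteq> U \<Longrightarrow> s \<in> pcarrier (F U)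
      \<Longrightarrow> h W (res U W s) = h U s"
begin

lemma germ_lift_germ:
  assumes "openin T U" "x \<in> U" "s \<in> pcarrier (F U)"
  shows "germ_lift h (germ T F res x U s) = h U s"
  unfolding germ_lift_def
proof (rule some_equality)
  have "((U, s), (U, s)) \<in> germ_rel T F res x"
    using assms by (auto simp: germ_rel_iff)
  then show "\<exists>V t. (V, t) \<in> germ T F res x U s \<and> h U s = h V t"
    unfolding germ_def by blast
next
  fix b assume "\<exists>V t. (V, t) \<in> germ T F res x U s \<and> b = h V t"
  then obtain V t W where V: "openin T V" "t \<in> pcarrier (F V)" and b: "b = h V t"
    and W: "openin T W" "x \<in> W" "W \<subseteq> U \<inter> V" "res U W s = res V W t"
    unfolding germ_def germ_rel_iff Image_singleton_iff by blast
  have "h V t = h W (res V W t)" using cocone_res[OF V(1) W(1,2) _ V(2)] W(3) by simp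
  also have "\<dots> = h U s" using cocone_res[OF assms(1) W(1,2) _ assms(3)] W(3,4) by simp
  finally show "b = h U s" using b by simp
qed

lemma germ_lift_hom: "pring_hom (stalk T F res x) B (germ_lift h)"
  unfolding pring_hom_def
proof (intro conjI ballI allI impI subsetI)
  show "b \<in> pcarrier B" if "b \<in> germ_lift h ` pcarrier (stalk T F res x)" for b
    using that pring_homD(1)[OF cocone_hom] by (auto elim!: stalk_carrierE simp: germ_lift_germ)
  show "germ_lift h (pzero (stalk T F res x)) = pzero B"
    "germ_lift h (pone (stalk T F res x)) = pone B"
    unfolding stalk_zero stalk_one using point closedD(1,2)
    by (simp_all add: germ_lift_germ pring_homD(2,3)[OF cocone_hom])
next
  fix G H assume "G \<in> pcarrier (stalk T F res x)" "H \<in> pcarrier (stalk T F res x)"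
  then obtain U s V t where U: "openin T U" "x \<in> U" "s \<in> pcarrier (F U)"
    and V: "openin T V" "x \<in> V" "t \<in> pcarrier (F V)"
    and GH: "G = germ T F res x U s" "H = germ T F res x V t"
    by (elim stalk_carrierE)
  have UV: "openin T (U \<inter> V)" "x \<in> U \<inter> V" using U V by auto
  have carr: "res U (U \<inter> V) s \<in> pcarrier (F (U \<inter> V))" "res V (U \<inter> V) t \<in> pcarrier (F (U \<inter> V))"
    using res_carrier U V UV by auto
  show "germ_lift h (pmul (stalk T F res x) G H) = pmul B (germ_lift h G) (germ_lift h H)"
    unfolding GH stalk_mul_germ[OF U V]
    using germ_lift_germ[OF UV closedD(3)[OF UV(1) carr]] germ_lift_germ[OF U] germ_lift_germ[OF V]
      pring_homD(4)[OF cocone_hom[OF UV] carr] cocone_res[OF U(1) UV _ U(3)] cocone_res[OF V(1) UV _ V(3)]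
    by simp
next
  fix G H assume "psummable (stalk T F res x) G H"
  then obtain U s V t W where U: "openin T U" "x \<in> U" "s \<in> pcarrier (F U)"
    and V: "openin T V" "x \<in> V" "t \<in> pcarrier (F V)"
    and GH: "G = germ T F res x U s" "H = germ T F res x V t"
    and W: "openin T W" "x \<in> W" "W \<subseteq> U \<inter> V" "psummable (F W) (res U W s) (res V W t)"
    by (elim stalk_summableE)
  have carr: "res U W s \<in> pcarrier (F W)" "res V W t \<in> pcarrier (F W)"
    using res_carrier U V W by auto
  have hW: "h W (res U W s) = h U s" "h W (res V W t) = h V t"
    using cocone_res[OF U(1) W(1,2) _ U(3)] cocone_res[OF V(1) W(1,2) _ V(3)] W(3) by auto
  show "psummable B (germ_lift h G) (germ_lift h H)"
    using pring_homD(5)[OF cocone_hom[OF W(1,2)] W(4)]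
    by (simp add: GH germ_lift_germ U V hW)
  show "germ_lift h (padd (stalk T F res x) G H) = padd B (germ_lift h G) (germ_lift h H)"
    unfolding GH stalk_add_germ[OF U V W]
    using germ_lift_germ[OF W(1,2) closedD(4)[OF W(1) carr W(4)]]
      pring_homD(6)[OF cocone_hom[OF W(1,2)] W(4)]
    by (simp add: germ_lift_germ U V hW)
qed

theorem germ_lift_iso:
  assumes jointly_injective: "\<And>U s V t. openin T U \<Longrightarrow> x \<in> U \<Longrightarrow> s \<in> pcarrier (F U)
      \<Longrightarrow> openin T V \<Longrightarrow> x \<in> V \<Longrightarrow> t \<in> pcarrier (F V) \<Longrightarrow> h U s = h V t
      \<Longrightarrow> \<exists>W. openin T W \<and> x \<in> W \<and> W \<subseteq> U \<inter> V \<and> res U W s = res V W t"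
    and jointly_surjective: "\<And>b. b \<in> pcarrier B
      \<Longrightarrow> \<exists>U s. openin T U \<and> x \<in> U \<and> s \<in> pcarrier (F U) \<and> b = h U s"
    and summable_reflect: "\<And>U s V t. openin T U \<Longrightarrow> x \<in> U \<Longrightarrow> s \<in> pcarrier (F U)
      \<Longrightarrow> openin T V \<Longrightarrow> x \<in> V \<Longrightarrow> t \<in> pcarrier (F V) \<Longrightarrow> psummable B (h U s) (h V t)
      \<Longrightarrow> \<exists>W. openin T W \<and> x \<in> W \<and> W \<subseteq> U \<inter> V \<and> psummable (F W) (res U W s) (res V W t)"
  shows "pring_iso (stalk T F res x) B (germ_lift h)"
  unfolding pring_iso_def bij_betw_def
proof (intro conjI germ_lift_hom inj_onI ballI impI)
  fix G H assume "G \<in> pcarrier (stalk T F res x)" "H \<in> pcarrier (stalk T F res x)"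
  then obtain U s V t where U: "openin T U" "x \<in> U" "s \<in> pcarrier (F U)"
    and V: "openin T V" "x \<in> V" "t \<in> pcarrier (F V)"
    and GH: "G = germ T F res x U s" "H = germ T F res x V t"
    by (elim stalk_carrierE)
  {
    assume "germ_lift h G = germ_lift h H"
    then have "h U s = h V t" by (simp add: GH germ_lift_germ U V)
    then show "G = H" unfolding GH germ_eq_iff[OF U V] by (rule jointly_injective[OF U V])
  next
    assume "psummable B (germ_lift h G) (germ_lift h H)"
    then have "psummable B (h U s) (h V t)" by (simp add: GH germ_lift_germ U V)
    then show "psummable (stalk T F res x) G H"
      unfolding GH stalk_summable_germ_iff[OF U V] by (rule summable_reflect[OF U V])
  }
next
  show "germ_lift h ` pcarrier (stalk T F res x) = pcarrier B"
  proof (intro equalityI subsetI)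
    show "b \<in> pcarrier B" if "b \<in> germ_lift h ` pcarrier (stalk T F res x)" for b
      using that germ_lift_hom unfolding pring_hom_def by blast
    fix b assume "b \<in> pcarrier B"
    then obtain U s where U: "openin T U" "x \<in> U" "s \<in> pcarrier (F U)" and b: "b = h U s"
      using jointly_surjective by blast
    show "b \<in> germ_lift h ` pcarrier (stalk T F res x)"
      using germ_in_stalk[OF U] germ_lift_germ[OF U] b by force
  qed
qed

end


section \<open>Sheafification preserves stalks\<close>

context pring_presheaf
begin

lemma sheafify_carrier:
  "\<sigma> \<in> pcarrier (sheafify T F res U) \<longleftrightarrow> (\<forall>q. q \<notin> U \<longrightarrow> \<sigma> q = {})
    \<and> (\<forall>q\<in>U. \<exists>V t. openin T V \<and> q \<in> V \<and> V \<subseteq> U \<and> t \<in> pcarrier (F V)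
          \<and> (\<forall>r\<in>V. \<sigma> r = germ T F res r V t))"
  by (simp add: sheafify_def)

lemma sheafify_ops:
  "pzero (sheafify T F res U) = (\<lambda>q. if q \<in> U then pzero (stalk T F res q) else {})"
  "pone (sheafify T F res U) = (\<lambda>q. if q \<in> U then pone (stalk T F res q) else {})"
  "psummable (sheafify T F res U) \<sigma> \<tau> \<longleftrightarrow> (\<forall>q\<in>U. psummable (stalk T F res q) (\<sigma> q) (\<tau> q))"
  "padd (sheafify T F res U) \<sigma> \<tau> = (\<lambda>q. if q \<in> U then padd (stalk T F res q) (\<sigma> q) (\<tau> q) else {})"
  "pmul (sheafify T F res U) \<sigma> \<tau> = (\<lambda>q. if q \<in> U then pmul (stalk T F res q) (\<sigma> q) (\<tau> q) else {})"
  by (simp_all add: sheafify_def)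

lemma sheafify_sectionI:
  assumes "\<And>q. q \<notin> U \<Longrightarrow> \<sigma> q = {}"
    and "\<And>q. q \<in> U \<Longrightarrow> \<exists>V t. openin T V \<and> q \<in> V \<and> V \<subseteq> U \<and> t \<in> pcarrier (F V)
          \<and> (\<forall>r\<in>V. \<sigma> r = germ T F res r V t)"
  shows "\<sigma> \<in> pcarrier (sheafify T F res U)"
  unfolding sheafify_carrier using assms by blast

lemma sheafify_sectionE:
  assumes "\<sigma> \<in> pcarrier (sheafify T F res U)" "q \<in> U"
  obtains V t where "openin T V" "q \<in> V" "V \<subseteq> U" "t \<in> pcarrier (F V)"
    "\<And>r. r \<in> V \<Longrightarrow> \<sigma> r = germ T F res r V t"
  using assms unfolding sheafify_carrier by metis

lemma sheafify_germ_section: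
  assumes "openin T V" "t \<in> pcarrier (F V)"
  shows "(\<lambda>r. if r \<in> V then germ T F res r V t else {}) \<in> pcarrier (sheafify T F res V)"
  using assms by (intro sheafify_sectionI) auto

lemma sheafify_mul_closed:
  assumes \<sigma>: "\<sigma> \<in> pcarrier (sheafify T F res U)" and \<tau>: "\<tau> \<in> pcarrier (sheafify T F res U)"
  shows "pmul (sheafify T F res U) \<sigma> \<tau> \<in> pcarrier (sheafify T F res U)"
  unfolding sheafify_ops
proof (rule sheafify_sectionI)
  fix q assume "q \<in> U"
  obtain V1 c where V1: "openin T V1" "q \<in> V1" "V1 \<subseteq> U" "c \<in> pcarrier (F V1)"
    and \<sigma>_loc: "\<And>r. r \<in> V1 \<Longrightarrow> \<sigma> r = germ T F res r V1 c"
    using sheafify_sectionE[OF \<sigma> \<open>q \<in> U\<close>] by blast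
  obtain V2 d where V2: "openin T V2" "q \<in> V2" "V2 \<subseteq> U" "d \<in> pcarrier (F V2)"
    and \<tau>_loc: "\<And>r. r \<in> V2 \<Longrightarrow> \<tau> r = germ T F res r V2 d"
    using sheafify_sectionE[OF \<tau> \<open>q \<in> U\<close>] by blast
  let ?V = "V1 \<inter> V2"
  have V: "openin T ?V" "q \<in> ?V" "?V \<subseteq> U" using V1 V2 by auto
  have prod: "pmul (F ?V) (res V1 ?V c) (res V2 ?V d) \<in> pcarrier (F ?V)"
    using closedD(3)[OF V(1)] res_carrier V1 V2 V by auto
  have "pmul (stalk T F res r) (\<sigma> r) (\<tau> r) = germ T F res r ?V (pmul (F ?V) (res V1 ?V c) (res V2 ?V d))"
    if "r \<in> ?V" for r
    using that \<sigma>_loc \<tau>_loc stalk_mul_germ[of V1 r c V2 d] V1 V2 by auto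
  then show "\<exists>V t. openin T V \<and> q \<in> V \<and> V \<subseteq> U \<and> t \<in> pcarrier (F V) \<and>
      (\<forall>r\<in>V. (if r \<in> U then pmul (stalk T F res r) (\<sigma> r) (\<tau> r) else {}) = germ T F res r V t)"
    using V prod by (intro exI[of _ ?V] exI) auto
qed simp

lemma sheafify_add_closed:
  assumes \<sigma>: "\<sigma> \<in> pcarrier (sheafify T F res U)" and \<tau>: "\<tau> \<in> pcarrier (sheafify T F res U)"
    and sum: "psummable (sheafify T F res U) \<sigma> \<tau>"
  shows "padd (sheafify T F res U) \<sigma> \<tau> \<in> pcarrier (sheafify T F res U)"
  unfolding sheafify_ops
proof (rule sheafify_sectionI)
  fix q assume "q \<in> U"
  obtain V1 c where V1: "openin T V1" "q \<in> V1" "V1 \<subseteq> U" "c \<in> pcarrier (F V1)"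
    and \<sigma>_loc: "\<And>r. r \<in> V1 \<Longrightarrow> \<sigma> r = germ T F res r V1 c"
    using sheafify_sectionE[OF \<sigma> \<open>q \<in> U\<close>] by blast
  obtain V2 d where V2: "openin T V2" "q \<in> V2" "V2 \<subseteq> U" "d \<in> pcarrier (F V2)"
    and \<tau>_loc: "\<And>r. r \<in> V2 \<Longrightarrow> \<tau> r = germ T F res r V2 d"
    using sheafify_sectionE[OF \<tau> \<open>q \<in> U\<close>] by blast
  have "psummable (stalk T F res q) (\<sigma> q) (\<tau> q)"
    using sum \<open>q \<in> U\<close> unfolding sheafify_ops by blast
  then have "psummable (stalk T F res q) (germ T F res q V1 c) (germ T F res q V2 d)"
    using \<sigma>_loc[OF V1(2)] \<tau>_loc[OF V2(2)] by simp
  then obtain W where W: "openin T W" "q \<in> W" "W \<subseteq> V1 \<inter> V2"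
      "psummable (F W) (res V1 W c) (res V2 W d)"
    unfolding stalk_summable_germ_iff[OF V1(1,2,4) V2(1,2,4)] by blast
  have add: "padd (F W) (res V1 W c) (res V2 W d) \<in> pcarrier (F W)"
    using closedD(4)[OF W(1) _ _ W(4)] res_carrier V1 V2 W by auto
  have "padd (stalk T F res r) (\<sigma> r) (\<tau> r) = germ T F res r W (padd (F W) (res V1 W c) (res V2 W d))"
    if "r \<in> W" for r
  proof -
    have "r \<in> V1" "r \<in> V2" using that W(3) by auto
    then show ?thesis
      using \<sigma>_loc \<tau>_loc stalk_add_germ[OF V1(1) _ V1(4) V2(1) _ V2(4) W(1) that W(3,4)] by simp
  qed
  then show "\<exists>V t. openin T V \<and> q \<in> V \<and> V \<subseteq> U \<and> t \<in> pcarrier (F V) \<and>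
      (\<forall>r\<in>V. (if r \<in> U then padd (stalk T F res r) (\<sigma> r) (\<tau> r) else {}) = germ T F res r V t)"
    using W V1 add by (intro exI[of _ W] exI) auto
qed simp

lemma sheafify_closed:
  assumes U: "openin T U"
  shows "pring_closed (sheafify T F res U)"
proof -
  have top: "openin T (topspace T)" "U \<subseteq> topspace T" using U openin_subset by auto
  have "pzero (sheafify T F res U)
      = (\<lambda>r. if r \<in> U then germ T F res r U (res (topspace T) U (pzero (F (topspace T)))) else {})"
    "pone (sheafify T F res U)
      = (\<lambda>r. if r \<in> U then germ T F res r U (res (topspace T) U (pone (F (topspace T)))) else {})"
    unfolding sheafify_ops stalk_zero stalk_one
    using germ_restrict[OF top(1) U _ top(2)] closedD(1,2)[OF top(1)] by (auto simp: fun_eq_iff)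
  then have "pzero (sheafify T F res U) \<in> pcarrier (sheafify T F res U)"
    "pone (sheafify T F res U) \<in> pcarrier (sheafify T F res U)"
    using sheafify_germ_section[OF U] res_carrier[OF top(1) U top(2)] closedD(1,2)[OF top(1)] by simp_all
  then show ?thesis
    unfolding pring_closed_def using sheafify_mul_closed sheafify_add_closed by blast
qed

lemma sheafify_res_hom:
  assumes U: "openin T U" and V: "openin T V" "V \<subseteq> U"
  shows "pring_hom (sheafify T F res U) (sheafify T F res V) (sheafify_res U V)"
  unfolding pring_hom_def
proof (intro conjI ballI allI impI subsetI)
  fix \<rho> assume "\<rho> \<in> sheafify_res U V ` pcarrier (sheafify T F res U)"
  then obtain \<sigma> where \<sigma>: "\<sigma> \<in> pcarrier (sheafify T F res U)" and \<rho>: "\<rho> = sheafify_res U V \<sigma>"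
    by blast
  show "\<rho> \<in> pcarrier (sheafify T F res V)"
    unfolding \<rho>
  proof (rule sheafify_sectionI)
    fix q assume "q \<in> V"
    obtain V1 c where V1: "openin T V1" "q \<in> V1" "V1 \<subseteq> U" "c \<in> pcarrier (F V1)"
      and \<sigma>_loc: "\<And>r. r \<in> V1 \<Longrightarrow> \<sigma> r = germ T F res r V1 c"
      using sheafify_sectionE[OF \<sigma>] \<open>q \<in> V\<close> V(2) by blast
    have W: "openin T (V1 \<inter> V)" "q \<in> V1 \<inter> V" "V1 \<inter> V \<subseteq> V1" using V1 V \<open>q \<in> V\<close> by auto
    have "sheafify_res U V \<sigma> r = germ T F res r (V1 \<inter> V) (res V1 (V1 \<inter> V) c)" if "r \<in> V1 \<inter> V" for r
      using that \<sigma>_loc germ_restrict[OF V1(1) W(1) that W(3) V1(4)] by (simp add: sheafify_res_def)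
    then show "\<exists>W t. openin T W \<and> q \<in> W \<and> W \<subseteq> V \<and> t \<in> pcarrier (F W) \<and>
        (\<forall>r\<in>W. sheafify_res U V \<sigma> r = germ T F res r W t)"
      using W res_carrier[OF V1(1) W(1,3) V1(4)] by (intro exI[of _ "V1 \<inter> V"] exI) auto
  qed (simp add: sheafify_res_def)
qed (use V(2) in \<open>auto simp: sheafify_ops sheafify_res_def fun_eq_iff\<close>)

lemma sheafify_presheaf: "pring_presheaf T (sheafify T F res) sheafify_res"
  by unfold_locales (auto simp: sheafify_closed sheafify_res_hom sheafify_res_def fun_eq_iff)

lemma sheafify_eval_hom:
  assumes "x \<in> U"
  shows "pring_hom (sheafify T F res U) (stalk T F res x) (\<lambda>\<sigma>. \<sigma> x)"
  unfolding pring_hom_def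
proof (intro conjI ballI allI impI subsetI)
  fix G assume "G \<in> (\<lambda>\<sigma>. \<sigma> x) ` pcarrier (sheafify T F res U)"
  then obtain \<sigma> where \<sigma>: "\<sigma> \<in> pcarrier (sheafify T F res U)" and G: "G = \<sigma> x" by blast
  obtain V t where "openin T V" "x \<in> V" "t \<in> pcarrier (F V)" "\<sigma> x = germ T F res x V t"
    using sheafify_sectionE[OF \<sigma> assms] by metis
  then show "G \<in> pcarrier (stalk T F res x)" using G germ_in_stalk by simp
qed (use assms in \<open>auto simp: sheafify_ops\<close>)

lemma sheafify_eq_near:
  assumes \<sigma>: "\<sigma> \<in> pcarrier (sheafify T F res U)" "x \<in> U"
    and \<tau>: "\<tau> \<in> pcarrier (sheafify T F res V)" "x \<in> V" and "\<sigma> x = \<tau> x"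
  obtains W where "openin T W" "x \<in> W" "W \<subseteq> U \<inter> V" "\<And>r. r \<in> W \<Longrightarrow> \<sigma> r = \<tau> r"
proof -
  obtain V1 c where V1: "openin T V1" "x \<in> V1" "V1 \<subseteq> U" "c \<in> pcarrier (F V1)"
    and \<sigma>_loc: "\<And>r. r \<in> V1 \<Longrightarrow> \<sigma> r = germ T F res r V1 c"
    using sheafify_sectionE[OF \<sigma>] by blast
  obtain V2 d where V2: "openin T V2" "x \<in> V2" "V2 \<subseteq> V" "d \<in> pcarrier (F V2)"
    and \<tau>_loc: "\<And>r. r \<in> V2 \<Longrightarrow> \<tau> r = germ T F res r V2 d"
    using sheafify_sectionE[OF \<tau>] by blast
  have "germ T F res x V1 c = germ T F res x V2 d"
    using assms(5) \<sigma>_loc[OF V1(2)] \<tau>_loc[OF V2(2)] by simp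
  then obtain W where W: "openin T W" "x \<in> W" "W \<subseteq> V1 \<inter> V2"
      "\<And>r. r \<in> W \<Longrightarrow> germ T F res r V1 c = germ T F res r V2 d"
    using germ_eq_near[OF V1(1,2,4) V2(1,2,4)] by blast
  have "\<sigma> r = \<tau> r" if "r \<in> W" for r
  proof -
    have "r \<in> V1" "r \<in> V2" using that W(3) by auto
    then show ?thesis using \<sigma>_loc \<tau>_loc W(4)[OF that] by simp
  qed
  then show thesis using that W V1(3) V2(3) by blast
qed

lemma sheafify_summable_near:
  assumes \<sigma>: "\<sigma> \<in> pcarrier (sheafify T F res U)" "x \<in> U"
    and \<tau>: "\<tau> \<in> pcarrier (sheafify T F res V)" "x \<in> V"
    and "psummable (stalk T F res x) (\<sigma> x) (\<tau> x)"
  obtains W where "openin T W" "x \<in> W" "W \<subseteq> U \<inter> V"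
    "\<And>r. r \<in> W \<Longrightarrow> psummable (stalk T F res r) (\<sigma> r) (\<tau> r)"
proof -
  obtain V1 c where V1: "openin T V1" "x \<in> V1" "V1 \<subseteq> U" "c \<in> pcarrier (F V1)"
    and \<sigma>_loc: "\<And>r. r \<in> V1 \<Longrightarrow> \<sigma> r = germ T F res r V1 c"
    using sheafify_sectionE[OF \<sigma>] by blast
  obtain V2 d where V2: "openin T V2" "x \<in> V2" "V2 \<subseteq> V" "d \<in> pcarrier (F V2)"
    and \<tau>_loc: "\<And>r. r \<in> V2 \<Longrightarrow> \<tau> r = germ T F res r V2 d"
    using sheafify_sectionE[OF \<tau>] by blast
  obtain W where W: "openin T W" "x \<in> W" "W \<subseteq> V1 \<inter> V2"
      "psummable (F W) (res V1 W c) (res V2 W d)"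
    using assms(5) \<sigma>_loc[OF V1(2)] \<tau>_loc[OF V2(2)] stalk_summable_germ_iff[OF V1(1,2,4) V2(1,2,4)]
    by auto
  have "psummable (stalk T F res r) (\<sigma> r) (\<tau> r)" if "r \<in> W" for r
  proof -
    have r: "r \<in> V1" "r \<in> V2" using that W(3) by auto
    then show ?thesis
      unfolding \<sigma>_loc[OF r(1)] \<tau>_loc[OF r(2)] stalk_summable_germ_iff[OF V1(1) r(1) V1(4) V2(1) r(2) V2(4)]
      using that W by blast
  qed
  then show thesis using that W V1(3) V2(3) by blast
qed

theorem stalk_sheafify_iso:
  assumes x: "x \<in> topspace T"
  shows "pring_iso (stalk T (sheafify T F res) sheafify_res x) (stalk T F res x) (germ_lift (\<lambda>U \<sigma>. \<sigma> x))"
proof -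
  interpret sheaf: pring_presheaf T "sheafify T F res" sheafify_res
    by (rule sheafify_presheaf)
  interpret eval: pring_presheaf_cocone T "sheafify T F res" sheafify_res x "stalk T F res x" "\<lambda>U \<sigma>. \<sigma> x"
    by unfold_locales (use x in \<open>auto simp: sheafify_eval_hom sheafify_res_def\<close>)
  show ?thesis
  proof (rule eval.germ_lift_iso)
    fix U \<sigma> V \<tau>
    assume U: "openin T U" "x \<in> U" "\<sigma> \<in> pcarrier (sheafify T F res U)"
      and V: "openin T V" "x \<in> V" "\<tau> \<in> pcarrier (sheafify T F res V)"
    {
      assume "\<sigma> x = \<tau> x"
      then obtain W where W: "openin T W" "x \<in> W" "W \<subseteq> U \<inter> V" "\<And>r. r \<in> W \<Longrightarrow> \<sigma> r = \<tau> r"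
        using sheafify_eq_near[OF U(3,2) V(3,2)] by blast
      then show "\<exists>W. openin T W \<and> x \<in> W \<and> W \<subseteq> U \<inter> V \<and> sheafify_res U W \<sigma> = sheafify_res V W \<tau>"
        by (intro exI[of _ W]) (simp add: sheafify_res_def fun_eq_iff)
    next
      assume "psummable (stalk T F res x) (\<sigma> x) (\<tau> x)"
      then obtain W where W: "openin T W" "x \<in> W" "W \<subseteq> U \<inter> V"
          "\<And>r. r \<in> W \<Longrightarrow> psummable (stalk T F res r) (\<sigma> r) (\<tau> r)"
        using sheafify_summable_near[OF U(3,2) V(3,2)] by blast
      then show "\<exists>W. openin T W \<and> x \<in> W \<and> W \<subseteq> U \<inter> V
          \<and> psummable (sheafify T F res W) (sheafify_res U W \<sigma>) (sheafify_res V W \<tau>)"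
        by (intro exI[of _ W]) (simp add: sheafify_ops sheafify_res_def)
    }
  next
    fix G assume "G \<in> pcarrier (stalk T F res x)"
    then obtain V t where V: "openin T V" "x \<in> V" "t \<in> pcarrier (F V)" and G: "G = germ T F res x V t"
      by (elim stalk_carrierE)
    then show "\<exists>U \<sigma>. openin T U \<and> x \<in> U \<and> \<sigma> \<in> pcarrier (sheafify T F res U) \<and> G = \<sigma> x"
      using sheafify_germ_section[OF V(1,3)]
      by (intro exI[of _ V] exI[of _ "\<lambda>r. if r \<in> V then germ T F res r V t else {}"]) simp
  qed
qed

end


section \<open>Localization of a partial ring\<close>

locale pcring =
  fixes R :: "'a pring"
  assumes partial_ring: "partial_ring R"
begin

abbreviation carrier ("A") where "A \<equiv> pcarrier R"
abbreviation mul (infixl "\<odot>" 70) where "a \<odot> b \<equiv> pmul R a b"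
abbreviation add (infixl "\<oplus>" 65) where "a \<oplus> b \<equiv> padd R a b"
abbreviation summable where "summable a b \<equiv> psummable R a b"
abbreviation one where "one \<equiv> pone R"
abbreviation zero where "zero \<equiv> pzero R"

lemma zero_closed [simp]: "zero \<in> A"
  and one_closed [simp]: "one \<in> A"
  using partial_ring unfolding partial_ring_def by auto

lemma mul_closed [simp]: "a \<in> A \<Longrightarrow> b \<in> A \<Longrightarrow> a \<odot> b \<in> A"
  using partial_ring unfolding partial_ring_def by auto

lemma summable_carrier: "summable a b \<Longrightarrow> a \<in> A \<and> b \<in> A \<and> a \<oplus> b \<in> A"
  using partial_ring unfolding partial_ring_def by auto

lemma mul_comm: "a \<in> A \<Longrightarrow> b \<in> A \<Longrightarrow> a \<odot> b = b \<odot> a"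
  using partial_ring unfolding partial_ring_def by auto

lemma mul_assoc: "a \<in> A \<Longrightarrow> b \<in> A \<Longrightarrow> c \<in> A \<Longrightarrow> (a \<odot> b) \<odot> c = a \<odot> (b \<odot> c)"
  using partial_ring unfolding partial_ring_def by auto

lemma mul_left_commute: "a \<in> A \<Longrightarrow> b \<in> A \<Longrightarrow> c \<in> A \<Longrightarrow> a \<odot> (b \<odot> c) = b \<odot> (a \<odot> c)"
  by (metis mul_assoc mul_comm)

lemmas mul_ac = mul_assoc mul_comm mul_left_commute

lemma one_mul [simp]: "a \<in> A \<Longrightarrow> one \<odot> a = a"
  using partial_ring unfolding partial_ring_def by auto

lemma mul_one [simp]: "a \<in> A \<Longrightarrow> a \<odot> one = a"
  using one_mul mul_comm by simp

lemma summable_mul: "summable a b \<Longrightarrow> x \<in> A \<Longrightarrow> summable (a \<odot> x) (b \<odot> x)"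
  using partial_ring unfolding partial_ring_def by auto

lemma add_mul: "summable a b \<Longrightarrow> x \<in> A \<Longrightarrow> (a \<oplus> b) \<odot> x = a \<odot> x \<oplus> b \<odot> x"
  using partial_ring unfolding partial_ring_def by auto

lemma mul_add: "summable a b \<Longrightarrow> x \<in> A \<Longrightarrow> x \<odot> (a \<oplus> b) = x \<odot> a \<oplus> x \<odot> b"
  using add_mul mul_comm summable_carrier by metis

definition multiplicative :: "'a set \<Rightarrow> bool" where
  "multiplicative S \<longleftrightarrow> S \<subseteq> A \<and> one \<in> S \<and> (\<forall>x\<in>S. \<forall>y\<in>S. x \<odot> y \<in> S)"

lemma multiplicativeD:
  assumes "multiplicative S"
  shows "S \<subseteq> A" "one \<in> S" "x \<in> S \<Longrightarrow> y \<in> S \<Longrightarrow> x \<odot> y \<in> S"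
  using assms unfolding multiplicative_def by auto

lemma loc_rel_iff:
  "((a, s), (b, t)) \<in> loc_rel R S \<longleftrightarrow>
     a \<in> A \<and> s \<in> S \<and> b \<in> A \<and> t \<in> S \<and> (\<exists>u\<in>S. u \<odot> (t \<odot> a) = u \<odot> (s \<odot> b))"
  unfolding loc_rel_def by simp

lemma loc_rel_equiv:
  assumes S: "multiplicative S"
  shows "equiv (A \<times> S) (loc_rel R S)"
proof (rule equivI)
  show "loc_rel R S \<subseteq> (A \<times> S) \<times> A \<times> S"
    unfolding loc_rel_def by blast
  show "refl_on (A \<times> S) (loc_rel R S)"
    by (rule refl_onI) (auto simp: loc_rel_iff intro: multiplicativeD(2)[OF S])
  show "sym (loc_rel R S)"
    unfolding sym_def loc_rel_def by (auto dest: sym)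
  show "trans (loc_rel R S)"
  proof (rule transI, clarify)
    fix a s b t c r
    assume "((a, s), (b, t)) \<in> loc_rel R S" "((b, t), (c, r)) \<in> loc_rel R S"
    then obtain u v where in_S: "s \<in> S" "t \<in> S" "r \<in> S" "u \<in> S" "v \<in> S"
      and in_A: "a \<in> A" "b \<in> A" "c \<in> A"
      and u: "u \<odot> (t \<odot> a) = u \<odot> (s \<odot> b)" and v: "v \<odot> (r \<odot> b) = v \<odot> (t \<odot> c)"
      unfolding loc_rel_iff by blast
    have A: "s \<in> A" "t \<in> A" "r \<in> A" "u \<in> A" "v \<in> A"
      using in_S multiplicativeD(1)[OF S] by auto
    have "(u \<odot> v \<odot> t) \<odot> (r \<odot> a) = (u \<odot> (t \<odot> a)) \<odot> (v \<odot> r)"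
      using A in_A by (simp add: mul_ac)
    also have "\<dots> = (u \<odot> (s \<odot> b)) \<odot> (v \<odot> r)"
      by (simp add: u)
    also have "\<dots> = (v \<odot> (r \<odot> b)) \<odot> (u \<odot> s)"
      using A in_A by (simp add: mul_ac)
    also have "\<dots> = (v \<odot> (t \<odot> c)) \<odot> (u \<odot> s)"
      by (simp add: v)
    also have "\<dots> = (u \<odot> v \<odot> t) \<odot> (s \<odot> c)"
      using A in_A by (simp add: mul_ac)
    finally have "(u \<odot> v \<odot> t) \<odot> (r \<odot> a) = (u \<odot> v \<odot> t) \<odot> (s \<odot> c)" .
    moreover have "u \<odot> v \<odot> t \<in> S" using multiplicativeD(3)[OF S] in_S by auto
    ultimately show "((a, s), (c, r)) \<in> loc_rel R S"
      unfolding loc_rel_iff using in_S in_A by blast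
  qed
qed

lemma frac_eq_iff:
  assumes "multiplicative S" "a \<in> A" "s \<in> S" "b \<in> A" "t \<in> S"
  shows "frac R S a s = frac R S b t \<longleftrightarrow> (\<exists>u\<in>S. u \<odot> (t \<odot> a) = u \<odot> (s \<odot> b))"
  unfolding frac_def using eq_equiv_class_iff[OF loc_rel_equiv, of S "(a, s)" "(b, t)"] assms
  by (simp add: loc_rel_iff)

lemma frac_eqI:
  assumes "multiplicative S" "a \<in> A" "s \<in> S" "b \<in> A" "t \<in> S"
    and "u \<in> S" "u \<odot> (t \<odot> a) = u \<odot> (s \<odot> b)"
  shows "frac R S a s = frac R S b t"
  using frac_eq_iff[OF assms(1-5)] assms(6,7) by blast

lemma localization_carrier:
  "pcarrier (localization R S) = {frac R S a s | a s. a \<in> A \<and> s \<in> S}"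
  by (simp add: localization_def)

lemma localization_zero: "pzero (localization R S) = frac R S zero one"
  and localization_one: "pone (localization R S) = frac R S one one"
  by (simp_all add: localization_def)

lemma localization_summable_iff:
  "psummable (localization R S) X Y \<longleftrightarrow> (\<exists>a s b t u. X = frac R S a s \<and> Y = frac R S b t
     \<and> a \<in> A \<and> s \<in> S \<and> b \<in> A \<and> t \<in> S \<and> u \<in> S \<and> summable (u \<odot> (t \<odot> a)) (u \<odot> (s \<odot> b)))"
  by (simp add: localization_def)

lemma localization_mul_frac:
  assumes S: "multiplicative S" and in_A: "a \<in> A" "b \<in> A" and in_S: "s \<in> S" "t \<in> S"
  shows "pmul (localization R S) (frac R S a s) (frac R S b t) = frac R S (a \<odot> b) (s \<odot> t)"
  unfolding localization_def pring.simps
proof (rule some_equality, (intro exI conjI; (rule refl in_A in_S)?), elim exE conjE)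
  fix Z a' s' b' t'
  assume eqs: "frac R S a s = frac R S a' s'" "frac R S b t = frac R S b' t'"
    and in_A': "a' \<in> A" "b' \<in> A" and in_S': "s' \<in> S" "t' \<in> S"
    and Z: "Z = frac R S (a' \<odot> b') (s' \<odot> t')"
  obtain v1 where v1: "v1 \<in> S" "v1 \<odot> (s' \<odot> a) = v1 \<odot> (s \<odot> a')"
    using eqs(1) frac_eq_iff[OF S in_A(1) in_S(1) in_A'(1) in_S'(1)] by blast
  obtain v2 where v2: "v2 \<in> S" "v2 \<odot> (t' \<odot> b) = v2 \<odot> (t \<odot> b')"
    using eqs(2) frac_eq_iff[OF S in_A(2) in_S(2) in_A'(2) in_S'(2)] by blast
  have A: "s \<in> A" "t \<in> A" "s' \<in> A" "t' \<in> A" "v1 \<in> A" "v2 \<in> A"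
    using in_S in_S' v1 v2 multiplicativeD(1)[OF S] by auto
  have "(v1 \<odot> v2) \<odot> ((s \<odot> t) \<odot> (a' \<odot> b')) = (v1 \<odot> (s \<odot> a')) \<odot> (v2 \<odot> (t \<odot> b'))"
    using A in_A' by (simp add: mul_ac)
  also have "\<dots> = (v1 \<odot> (s' \<odot> a)) \<odot> (v2 \<odot> (t' \<odot> b))"
    by (simp add: v1(2) v2(2))
  also have "\<dots> = (v1 \<odot> v2) \<odot> ((s' \<odot> t') \<odot> (a \<odot> b))"
    using A in_A by (simp add: mul_ac)
  finally show "Z = frac R S (a \<odot> b) (s \<odot> t)"
    unfolding Z using A in_A in_A' in_S in_S' v1(1) v2(1) multiplicativeD(3)[OF S]
    by (intro frac_eqI[OF S, of _ _ _ _ "v1 \<odot> v2"]) auto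
qed

lemma localization_summable_frac_iff:
  assumes S: "multiplicative S" and in_A: "a \<in> A" "b \<in> A" and in_S: "s \<in> S" "t \<in> S"
  shows "psummable (localization R S) (frac R S a s) (frac R S b t) \<longleftrightarrow>
         (\<exists>u\<in>S. summable (u \<odot> (t \<odot> a)) (u \<odot> (s \<odot> b)))"
proof
  assume "psummable (localization R S) (frac R S a s) (frac R S b t)"
  then obtain a' s' b' t' u' where eqs: "frac R S a s = frac R S a' s'" "frac R S b t = frac R S b' t'"
      and in_A': "a' \<in> A" "b' \<in> A" and in_S': "s' \<in> S" "t' \<in> S" "u' \<in> S"
      and sum: "summable (u' \<odot> (t' \<odot> a')) (u' \<odot> (s' \<odot> b'))"
    unfolding localization_summable_iff by blast
  obtain v1 where v1: "v1 \<in> S" "v1 \<odot> (s' \<odot> a) = v1 \<odot> (s \<odot> a')"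
    using eqs(1) frac_eq_iff[OF S in_A(1) in_S(1) in_A'(1) in_S'(1)] by blast
  obtain v2 where v2: "v2 \<in> S" "v2 \<odot> (t' \<odot> b) = v2 \<odot> (t \<odot> b')"
    using eqs(2) frac_eq_iff[OF S in_A(2) in_S(2) in_A'(2) in_S'(2)] by blast
  have A: "s \<in> A" "t \<in> A" "s' \<in> A" "t' \<in> A" "u' \<in> A" "v1 \<in> A" "v2 \<in> A"
    using in_S in_S' v1 v2 multiplicativeD(1)[OF S] by auto
  \<comment> \<open>multiplying both summands by m moves the summable pair to the representatives a/s and b/t\<close>
  define m where "m = v1 \<odot> v2 \<odot> s \<odot> t"
  define u where "u = u' \<odot> v1 \<odot> v2 \<odot> s' \<odot> t'"
  have "(u' \<odot> (t' \<odot> a')) \<odot> m = (v1 \<odot> (s \<odot> a')) \<odot> (u' \<odot> t' \<odot> v2 \<odot> t)"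
    unfolding m_def using A in_A' by (simp add: mul_ac)
  also have "\<dots> = (v1 \<odot> (s' \<odot> a)) \<odot> (u' \<odot> t' \<odot> v2 \<odot> t)"
    by (simp add: v1(2))
  also have "\<dots> = u \<odot> (t \<odot> a)"
    unfolding u_def using A in_A by (simp add: mul_ac)
  finally have eq1: "(u' \<odot> (t' \<odot> a')) \<odot> m = u \<odot> (t \<odot> a)" .
  have "(u' \<odot> (s' \<odot> b')) \<odot> m = (v2 \<odot> (t \<odot> b')) \<odot> (u' \<odot> s' \<odot> v1 \<odot> s)"
    unfolding m_def using A in_A' by (simp add: mul_ac)
  also have "\<dots> = (v2 \<odot> (t' \<odot> b)) \<odot> (u' \<odot> s' \<odot> v1 \<odot> s)"
    by (simp add: v2(2))
  also have "\<dots> = u \<odot> (s \<odot> b)"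
    unfolding u_def using A in_A by (simp add: mul_ac)
  finally have eq2: "(u' \<odot> (s' \<odot> b')) \<odot> m = u \<odot> (s \<odot> b)" .
  have "m \<in> A" "u \<in> S"
    unfolding m_def u_def using A v1(1) v2(1) in_S' multiplicativeD(3)[OF S] by auto
  then show "\<exists>u\<in>S. summable (u \<odot> (t \<odot> a)) (u \<odot> (s \<odot> b))"
    using summable_mul[OF sum] eq1 eq2 by metis
next
  assume "\<exists>u\<in>S. summable (u \<odot> (t \<odot> a)) (u \<odot> (s \<odot> b))"
  then show "psummable (localization R S) (frac R S a s) (frac R S b t)"
    unfolding localization_summable_iff using in_A in_S by blast
qed

lemma cross_mul_rep_eq:
  assumes "a \<in> A" "a' \<in> A" "s \<in> A" "s' \<in> A" "t \<in> A" "t' \<in> A" "u \<in> A" "u' \<in> A" "v \<in> A" "w \<in> A"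
    and v: "v \<odot> (s' \<odot> a) = v \<odot> (s \<odot> a')"
  shows "(v \<odot> w \<odot> (u \<odot> (s \<odot> t))) \<odot> (u' \<odot> (t' \<odot> a')) = (v \<odot> w \<odot> (u' \<odot> (s' \<odot> t'))) \<odot> (u \<odot> (t \<odot> a))"
proof -
  have "(v \<odot> w \<odot> (u \<odot> (s \<odot> t))) \<odot> (u' \<odot> (t' \<odot> a')) = (v \<odot> (s \<odot> a')) \<odot> (w \<odot> u \<odot> t \<odot> u' \<odot> t')"
    using assms(1-10) by (simp add: mul_ac)
  also have "\<dots> = (v \<odot> (s' \<odot> a)) \<odot> (w \<odot> u \<odot> t \<odot> u' \<odot> t')"
    by (simp add: v)
  also have "\<dots> = (v \<odot> w \<odot> (u' \<odot> (s' \<odot> t'))) \<odot> (u \<odot> (t \<odot> a))"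
    using assms(1-10) by (simp add: mul_ac)
  finally show ?thesis .
qed

lemma localization_add_frac:
  assumes S: "multiplicative S" and in_A: "a \<in> A" "b \<in> A" and in_S: "s \<in> S" "t \<in> S"
    and u: "u \<in> S" "summable (u \<odot> (t \<odot> a)) (u \<odot> (s \<odot> b))"
  shows "padd (localization R S) (frac R S a s) (frac R S b t) =
         frac R S (u \<odot> (t \<odot> a) \<oplus> u \<odot> (s \<odot> b)) (u \<odot> (s \<odot> t))"
  unfolding localization_def pring.simps
proof (rule some_equality, (intro exI conjI; (rule refl in_A in_S u)?), elim exE conjE)
  fix Z a' s' b' t' u'
  assume eqs: "frac R S a s = frac R S a' s'" "frac R S b t = frac R S b' t'"
    and in_A': "a' \<in> A" "b' \<in> A" and in_S': "s' \<in> S" "t' \<in> S" "u' \<in> S"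
    and u': "summable (u' \<odot> (t' \<odot> a')) (u' \<odot> (s' \<odot> b'))"
    and Z: "Z = frac R S (u' \<odot> (t' \<odot> a') \<oplus> u' \<odot> (s' \<odot> b')) (u' \<odot> (s' \<odot> t'))"
  obtain v1 where v1: "v1 \<in> S" "v1 \<odot> (s' \<odot> a) = v1 \<odot> (s \<odot> a')"
    using eqs(1) frac_eq_iff[OF S in_A(1) in_S(1) in_A'(1) in_S'(1)] by blast
  obtain v2 where v2: "v2 \<in> S" "v2 \<odot> (t' \<odot> b) = v2 \<odot> (t \<odot> b')"
    using eqs(2) frac_eq_iff[OF S in_A(2) in_S(2) in_A'(2) in_S'(2)] by blast
  have A: "s \<in> A" "t \<in> A" "u \<in> A" "s' \<in> A" "t' \<in> A" "u' \<in> A" "v1 \<in> A" "v2 \<in> A"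
    using in_S in_S' u(1) v1 v2 multiplicativeD(1)[OF S] by auto
  define w where "w = v1 \<odot> v2"
  define d where "d = u \<odot> (s \<odot> t)"
  define d' where "d' = u' \<odot> (s' \<odot> t')"
  have wd: "w \<in> A" "d \<in> A" "d' \<in> A" unfolding w_def d_def d'_def using A by auto
  have left: "(w \<odot> d) \<odot> (u' \<odot> (t' \<odot> a')) = (w \<odot> d') \<odot> (u \<odot> (t \<odot> a))"
    using cross_mul_rep_eq[OF in_A(1) in_A'(1) A(1,4,2,5,3,6,7,8) v1(2)] A
    unfolding w_def d_def d'_def by (simp add: mul_assoc)
  have right: "(w \<odot> d) \<odot> (u' \<odot> (s' \<odot> b')) = (w \<odot> d') \<odot> (u \<odot> (s \<odot> b))"
    using cross_mul_rep_eq[OF in_A(2) in_A'(2) A(2,5,1,4,3,6,8,7) v2(2)] A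
    unfolding w_def d_def d'_def by (simp add: mul_assoc mul_comm[of v2 v1] mul_comm[of t s] mul_comm[of t' s'])
  have sums: "u' \<odot> (t' \<odot> a') \<oplus> u' \<odot> (s' \<odot> b') \<in> A" "u \<odot> (t \<odot> a) \<oplus> u \<odot> (s \<odot> b) \<in> A"
    using summable_carrier u' u(2) by auto
  have "w \<odot> (d \<odot> (u' \<odot> (t' \<odot> a') \<oplus> u' \<odot> (s' \<odot> b')))
      = (w \<odot> d) \<odot> (u' \<odot> (t' \<odot> a') \<oplus> u' \<odot> (s' \<odot> b'))"
    using wd sums(1) by (simp add: mul_assoc)
  also have "\<dots> = (w \<odot> d') \<odot> (u \<odot> (t \<odot> a)) \<oplus> (w \<odot> d') \<odot> (u \<odot> (s \<odot> b))"
    using mul_add[OF u' mul_closed[OF wd(1,2)]] by (simp add: left right)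
  also have "\<dots> = w \<odot> (d' \<odot> (u \<odot> (t \<odot> a) \<oplus> u \<odot> (s \<odot> b)))"
    using mul_add[OF u(2) mul_closed[OF wd(1,3)]] wd sums(2) by (simp add: mul_assoc)
  finally have "w \<odot> (d \<odot> (u' \<odot> (t' \<odot> a') \<oplus> u' \<odot> (s' \<odot> b')))
      = w \<odot> (d' \<odot> (u \<odot> (t \<odot> a) \<oplus> u \<odot> (s \<odot> b)))" .
  moreover have "w \<in> S" "d \<in> S" "d' \<in> S"
    unfolding w_def d_def d'_def using v1(1) v2(1) in_S in_S' u(1) multiplicativeD(3)[OF S] by auto
  ultimately show "Z = frac R S (u \<odot> (t \<odot> a) \<oplus> u \<odot> (s \<odot> b)) (u \<odot> (s \<odot> t))"
    unfolding Z using frac_eqI[OF S sums(1) _ sums(2)] unfolding d_def d'_def by blast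
qed

lemma localization_carrierE:
  assumes "X \<in> pcarrier (localization R S)"
  obtains a s where "a \<in> A" "s \<in> S" "X = frac R S a s"
  using assms unfolding localization_carrier by blast

lemma frac_in_localization: "a \<in> A \<Longrightarrow> s \<in> S \<Longrightarrow> frac R S a s \<in> pcarrier (localization R S)"
  unfolding localization_carrier by blast

lemma localization_summable_carrier:
  "psummable (localization R S) X Y \<Longrightarrow>
     X \<in> pcarrier (localization R S) \<and> Y \<in> pcarrier (localization R S)"
  unfolding localization_summable_iff localization_carrier by blast

lemma localization_closed:
  assumes S: "multiplicative S"
  shows "pring_closed (localization R S)"
  unfolding pring_closed_def
proof (intro conjI ballI impI)
  show "pzero (localization R S) \<in> pcarrier (localization R S)"
    "pone (localization R S) \<in> pcarrier (localization R S)"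
    unfolding localization_zero localization_one using multiplicativeD(2)[OF S]
    by (auto intro: frac_in_localization)
next
  fix X Y assume "X \<in> pcarrier (localization R S)" "Y \<in> pcarrier (localization R S)"
  then obtain a s b t where in_A: "a \<in> A" "b \<in> A" and in_S: "s \<in> S" "t \<in> S"
    and XY: "X = frac R S a s" "Y = frac R S b t"
    by (metis localization_carrierE)
  show "pmul (localization R S) X Y \<in> pcarrier (localization R S)"
    unfolding XY localization_mul_frac[OF S in_A in_S]
    using in_A in_S multiplicativeD[OF S] by (auto intro: frac_in_localization)
  assume "psummable (localization R S) X Y"
  then obtain u where u: "u \<in> S" "summable (u \<odot> (t \<odot> a)) (u \<odot> (s \<odot> b))"
    unfolding XY localization_summable_frac_iff[OF S in_A in_S] by blast
  show "padd (localization R S) X Y \<in> pcarrier (localization R S)"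
    unfolding XY localization_add_frac[OF S in_A in_S u]
    using summable_carrier[OF u(2)] in_S u(1) multiplicativeD(3)[OF S]
    by (auto intro: frac_in_localization)
qed

lemma frac_image:
  assumes S: "multiplicative S" and S': "multiplicative S'" "S \<subseteq> S'" and "a \<in> A" "s \<in> S"
  shows "loc_rel R S' `` frac R S a s = frac R S' a s"
proof
  have sub: "loc_rel R S \<subseteq> loc_rel R S'"
    using S'(2) unfolding loc_rel_def by blast
  show "loc_rel R S' `` frac R S a s \<subseteq> frac R S' a s"
    unfolding frac_def using sub equivE[OF loc_rel_equiv[OF S'(1)]] by (auto dest: transD)
  show "frac R S' a s \<subseteq> loc_rel R S' `` frac R S a s"
    unfolding frac_def using equiv_class_self[OF loc_rel_equiv[OF S]] assms(4,5) by blast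
qed

lemma localization_map_hom:
  assumes S: "multiplicative S" and S': "multiplicative S'" "S \<subseteq> S'"
  shows "pring_hom (localization R S) (localization R S') (\<lambda>X. loc_rel R S' `` X)"
proof -
  have image: "loc_rel R S' `` frac R S a s = frac R S' a s" if "a \<in> A" "s \<in> S" for a s
    using frac_image[OF S S' that] .
  show ?thesis
    unfolding pring_hom_def
  proof (intro conjI ballI allI impI subsetI)
  show "Y \<in> pcarrier (localization R S')" if "Y \<in> (\<lambda>X. loc_rel R S' `` X) ` pcarrier (localization R S)" for Y
    using that S'(2) by (auto elim!: localization_carrierE simp: image intro!: frac_in_localization)
  show "loc_rel R S' `` pzero (localization R S) = pzero (localization R S')"
    "loc_rel R S' `` pone (localization R S) = pone (localization R S')"
    unfolding localization_zero localization_one using multiplicativeD(2)[OF S] by (simp_all add: image)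
next
  fix X Y assume "X \<in> pcarrier (localization R S)" "Y \<in> pcarrier (localization R S)"
  then obtain a s b t where in_A: "a \<in> A" "b \<in> A" and in_S: "s \<in> S" "t \<in> S"
    and XY: "X = frac R S a s" "Y = frac R S b t"
    by (metis localization_carrierE)
  have in_S': "s \<in> S'" "t \<in> S'" using in_S S'(2) by auto
  show "loc_rel R S' `` pmul (localization R S) X Y
      = pmul (localization R S') (loc_rel R S' `` X) (loc_rel R S' `` Y)"
    unfolding XY localization_mul_frac[OF S in_A in_S]
    using in_A in_S multiplicativeD(3)[OF S] by (simp add: image localization_mul_frac[OF S'(1) in_A in_S'])
next
  fix X Y assume "psummable (localization R S) X Y"
  then obtain a s b t u where in_A: "a \<in> A" "b \<in> A" and in_S: "s \<in> S" "t \<in> S"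
    and XY: "X = frac R S a s" "Y = frac R S b t"
    and u: "u \<in> S" "summable (u \<odot> (t \<odot> a)) (u \<odot> (s \<odot> b))"
    unfolding localization_summable_iff by blast
  have in_S': "s \<in> S'" "t \<in> S'" "u \<in> S'" using in_S u(1) S'(2) by auto
  show "psummable (localization R S') (loc_rel R S' `` X) (loc_rel R S' `` Y)"
    unfolding XY image[OF in_A(1) in_S(1)] image[OF in_A(2) in_S(2)]
    using localization_summable_frac_iff[OF S'(1) in_A in_S'(1,2)] in_S'(3) u(2) by blast
  show "loc_rel R S' `` padd (localization R S) X Y
      = padd (localization R S') (loc_rel R S' `` X) (loc_rel R S' `` Y)"
    unfolding XY localization_add_frac[OF S in_A in_S u]
    using summable_carrier[OF u(2)] in_A in_S u(1) multiplicativeD(3)[OF S]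
    by (simp add: image localization_add_frac[OF S'(1) in_A in_S'(1,2) in_S'(3) u(2)])
  qed
qed

lemma localization_map_trans:
  assumes "multiplicative S" "multiplicative S'" "multiplicative S''" "S \<subseteq> S'" "S' \<subseteq> S''"
    and "X \<in> pcarrier (localization R S)"
  shows "loc_rel R S'' `` (loc_rel R S' `` X) = loc_rel R S'' `` X"
proof -
  obtain a s where "a \<in> A" "s \<in> S" "X = frac R S a s"
    using assms(6) by (rule localization_carrierE)
  moreover have "s \<in> S'" using \<open>s \<in> S\<close> assms(4) by blast
  ultimately show ?thesis
    using frac_image[OF assms(1,2,4)] frac_image[OF assms(2,3,5)] frac_image[OF assms(1,3)] assms(4,5)
    by auto
qed

section \<open>The structure presheaf on the prime spectrum\<close>

lemma prime_subset: "P \<in> spec R \<Longrightarrow> P \<subseteq> A"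
  unfolding spec_def pprime_def pideal_def by blast

lemma prime_mulD: "P \<in> spec R \<Longrightarrow> a \<in> A \<Longrightarrow> b \<in> A \<Longrightarrow> a \<odot> b \<in> P \<Longrightarrow> a \<in> P \<or> b \<in> P"
  unfolding spec_def pprime_def by blast

lemma one_notin_prime:
  assumes P: "P \<in> spec R"
  shows "one \<notin> P"
proof
  assume "one \<in> P"
  then have "a \<odot> one \<in> P" if "a \<in> A" for a
    using P that unfolding spec_def pprime_def pideal_def by blast
  then have "A \<subseteq> P" by auto
  then show False using P prime_subset[OF P] unfolding spec_def pprime_def by blast
qed

lemma multiplicative_prime_compl: "P \<in> spec R \<Longrightarrow> multiplicative (A - P)"
  unfolding multiplicative_def using one_notin_prime prime_mulD by auto

lemma multiplicative_S_open: "U \<subseteq> spec R \<Longrightarrow> multiplicative (S_open R U)"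
  unfolding multiplicative_def S_open_def using one_notin_prime prime_mulD by fastforce

lemma S_open_antimono: "V \<subseteq> U \<Longrightarrow> S_open R U \<subseteq> S_open R V"
  unfolding S_open_def by auto

lemma S_open_subset_compl: "P \<in> U \<Longrightarrow> S_open R U \<subseteq> A - P"
  unfolding S_open_def by auto

lemma in_S_open_iff: "U \<subseteq> spec R \<Longrightarrow> s \<in> S_open R U \<longleftrightarrow> s \<in> A \<and> U \<subseteq> basic_open R s"
  unfolding S_open_def basic_open_def by auto

lemma topspace_zariski: "topspace (zariski R) = spec R"
proof -
  have "topspace (zariski R) = \<Union> (basic_open R ` A)"
    by (simp add: zariski_def)
  moreover have "spec R \<subseteq> basic_open R one"
    unfolding basic_open_def using one_notin_prime by blast
  ultimately show ?thesis
    unfolding basic_open_def using one_closed by blast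
qed

lemma openin_basic_open: "a \<in> A \<Longrightarrow> openin (zariski R) (basic_open R a)"
  unfolding zariski_def by (rule topology_generated_by_Basis) simp

lemma openin_zariski_subset: "openin (zariski R) U \<Longrightarrow> U \<subseteq> spec R"
  using openin_subset topspace_zariski by blast

lemma struct_presheaf_res_eq: "struct_presheaf_res R U V = (\<lambda>X. loc_rel R (S_open R V) `` X)"
  by (simp add: fun_eq_iff struct_presheaf_res_def)

lemma struct_presheaf_presheaf:
  "pring_presheaf (zariski R) (struct_presheaf R) (struct_presheaf_res R)"
proof
  fix U V W X
  assume U: "openin (zariski R) U"
  show "pring_closed (struct_presheaf R U)"
    unfolding struct_presheaf_def
    using localization_closed multiplicative_S_open openin_zariski_subset U by blast
  assume V: "openin (zariski R) V" "V \<subseteq> U"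
  show "pring_hom (struct_presheaf R U) (struct_presheaf R V) (struct_presheaf_res R U V)"
    unfolding struct_presheaf_def struct_presheaf_res_eq
    using localization_map_hom multiplicative_S_open openin_zariski_subset S_open_antimono U V by metis
  assume W: "openin (zariski R) W" "W \<subseteq> V" and X: "X \<in> pcarrier (struct_presheaf R U)"
  have "U \<subseteq> spec R" "V \<subseteq> spec R" "W \<subseteq> spec R"
    using U V(1) W(1) openin_zariski_subset by auto
  then show "struct_presheaf_res R V W (struct_presheaf_res R U V X) = struct_presheaf_res R U W X"
    unfolding struct_presheaf_res_eq
    using localization_map_trans[OF multiplicative_S_open multiplicative_S_open multiplicative_S_open
        S_open_antimono[OF V(2)] S_open_antimono[OF W(2)]] X
    unfolding struct_presheaf_def by blast
qed

lemma struct_presheaf_res_frac: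
  assumes "U \<subseteq> spec R" "W \<subseteq> U" "a \<in> A" "s \<in> S_open R U"
  shows "struct_presheaf_res R U W (frac R (S_open R U) a s) = frac R (S_open R W) a s"
proof -
  have "W \<subseteq> spec R" using assms(1,2) by blast
  then show ?thesis
    using frac_image[OF multiplicative_S_open[OF assms(1)] multiplicative_S_open
        S_open_antimono[OF assms(2)] assms(3,4)]
    by (simp add: struct_presheaf_res_eq)
qed

lemma basic_open_nbhd:
  assumes U: "openin (zariski R) U" "P \<in> U" and u: "u \<in> A - P"
  shows "openin (zariski R) (U \<inter> basic_open R u)" "P \<in> U \<inter> basic_open R u"
    "u \<in> S_open R (U \<inter> basic_open R u)"
proof -
  have "U \<subseteq> spec R" using openin_zariski_subset[OF U(1)] .
  then show "openin (zariski R) (U \<inter> basic_open R u)" "P \<in> U \<inter> basic_open R u"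
    "u \<in> S_open R (U \<inter> basic_open R u)"
    using U u openin_basic_open in_S_open_iff[of "U \<inter> basic_open R u"]
    unfolding basic_open_def by auto
qed

lemma struct_presheaf_cocone:
  assumes P: "P \<in> spec R"
  shows "pring_presheaf_cocone (zariski R) (struct_presheaf R) (struct_presheaf_res R)
    P (localization R (A - P)) (\<lambda>U X. loc_rel R (A - P) `` X)"
proof (intro pring_presheaf_cocone.intro pring_presheaf_cocone_axioms.intro struct_presheaf_presheaf)
  have SP: "multiplicative (A - P)" using multiplicative_prime_compl[OF P] .
  have S_open: "multiplicative (S_open R U)" "S_open R U \<subseteq> A - P"
    if "openin (zariski R) U" "P \<in> U" for U
    using that multiplicative_S_open openin_zariski_subset S_open_subset_compl by auto
  show "P \<in> topspace (zariski R)" using P topspace_zariski by simp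
  show "pring_hom (struct_presheaf R U) (localization R (A - P)) (\<lambda>X. loc_rel R (A - P) `` X)"
    if "openin (zariski R) U" "P \<in> U" for U
    unfolding struct_presheaf_def using localization_map_hom[OF S_open(1)[OF that] SP S_open(2)[OF that]] .
  show "loc_rel R (A - P) `` struct_presheaf_res R U W X = loc_rel R (A - P) `` X"
    if "openin (zariski R) U" "openin (zariski R) W" "P \<in> W" "W \<subseteq> U"
      "X \<in> pcarrier (struct_presheaf R U)" for U W X
  proof -
    have "P \<in> U" using that(3,4) by blast
    then show ?thesis
      using localization_map_trans[OF S_open(1)[OF that(1)] S_open(1)[OF that(2,3)] SP
          S_open_antimono[OF that(4)] S_open(2)[OF that(2,3)] that(5)[unfolded struct_presheaf_def]]
      by (simp add: struct_presheaf_res_eq)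
  qed
qed

lemma frac_eq_near:
  assumes P: "P \<in> spec R" and U: "openin (zariski R) U" "P \<in> U"
    and ab: "a \<in> A" "b \<in> A" and st: "s \<in> S_open R U" "t \<in> S_open R U"
    and eq: "frac R (A - P) a s = frac R (A - P) b t"
  obtains W where "openin (zariski R) W" "P \<in> W" "W \<subseteq> U"
    "frac R (S_open R W) a s = frac R (S_open R W) b t"
proof -
  have "s \<in> A - P" "t \<in> A - P" using st S_open_subset_compl[OF U(2)] by auto
  then obtain u where u: "u \<in> A - P" "u \<odot> (t \<odot> a) = u \<odot> (s \<odot> b)"
    using eq frac_eq_iff[OF multiplicative_prime_compl[OF P] ab(1) _ ab(2)] by blast
  let ?W = "U \<inter> basic_open R u"
  have W: "openin (zariski R) ?W" "P \<in> ?W" "u \<in> S_open R ?W"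
    using basic_open_nbhd[OF U u(1)] by auto
  have "?W \<subseteq> spec R" using openin_zariski_subset[OF W(1)] .
  then have "frac R (S_open R ?W) a s = frac R (S_open R ?W) b t"
    using st S_open_antimono[of ?W U] W(3) u(2) ab
    by (intro frac_eqI[OF multiplicative_S_open]) auto
  then show thesis using that W by blast
qed

lemma frac_summable_near:
  assumes P: "P \<in> spec R" and U: "openin (zariski R) U" "P \<in> U"
    and ab: "a \<in> A" "b \<in> A" and st: "s \<in> S_open R U" "t \<in> S_open R U"
    and sum: "psummable (localization R (A - P)) (frac R (A - P) a s) (frac R (A - P) b t)"
  obtains W where "openin (zariski R) W" "P \<in> W" "W \<subseteq> U"
    "psummable (localization R (S_open R W)) (frac R (S_open R W) a s) (frac R (S_open R W) b t)"
proof -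
  have "s \<in> A - P" "t \<in> A - P" using st S_open_subset_compl[OF U(2)] by auto
  then obtain u where u: "u \<in> A - P" "summable (u \<odot> (t \<odot> a)) (u \<odot> (s \<odot> b))"
    using sum localization_summable_frac_iff[OF multiplicative_prime_compl[OF P] ab] by blast
  let ?W = "U \<inter> basic_open R u"
  have W: "openin (zariski R) ?W" "P \<in> ?W" "u \<in> S_open R ?W"
    using basic_open_nbhd[OF U u(1)] by auto
  have "?W \<subseteq> spec R" using openin_zariski_subset[OF W(1)] .
  then have "psummable (localization R (S_open R ?W)) (frac R (S_open R ?W) a s) (frac R (S_open R ?W) b t)"
    using st S_open_antimono[of ?W U] W(3) u(2)
      localization_summable_frac_iff[OF multiplicative_S_open ab, of ?W s t]
    by blast
  then show thesis using that W by blast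
qed

lemma basic_open_section:
  assumes P: "P \<in> spec R" and a: "a \<in> A" and s: "s \<in> A - P"
  shows "openin (zariski R) (basic_open R s)" "P \<in> basic_open R s"
    "frac R (S_open R (basic_open R s)) a s \<in> pcarrier (struct_presheaf R (basic_open R s))"
    "loc_rel R (A - P) `` frac R (S_open R (basic_open R s)) a s = frac R (A - P) a s"
proof -
  let ?D = "basic_open R s"
  have D: "?D \<subseteq> spec R" "s \<in> S_open R ?D" using s in_S_open_iff[of ?D] unfolding basic_open_def by auto
  show "openin (zariski R) ?D" "P \<in> ?D" using s P openin_basic_open unfolding basic_open_def by auto
  then show "frac R (S_open R ?D) a s \<in> pcarrier (struct_presheaf R ?D)"
    "loc_rel R (A - P) `` frac R (S_open R ?D) a s = frac R (A - P) a s"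
    using frac_in_localization[OF a D(2)] frac_image[OF multiplicative_S_open[OF D(1)]
        multiplicative_prime_compl[OF P] S_open_subset_compl a D(2)]
    unfolding struct_presheaf_def by auto
qed

theorem stalk_struct_presheaf_iso:
  assumes P: "P \<in> spec R"
  shows "pring_iso (stalk (zariski R) (struct_presheaf R) (struct_presheaf_res R) P)
    (localization R (A - P)) (germ_lift (\<lambda>U X. loc_rel R (A - P) `` X))"
proof -
  interpret at_P: pring_presheaf_cocone "zariski R" "struct_presheaf R" "struct_presheaf_res R"
    P "localization R (A - P)" "\<lambda>U X. loc_rel R (A - P) `` X"
    by (rule struct_presheaf_cocone[OF P])
  have SP: "multiplicative (A - P)" using multiplicative_prime_compl[OF P] .
  show ?thesis
  proof (rule at_P.germ_lift_iso)
    fix U X V Y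
    assume U: "openin (zariski R) U" "P \<in> U" "X \<in> pcarrier (struct_presheaf R U)"
      and V: "openin (zariski R) V" "P \<in> V" "Y \<in> pcarrier (struct_presheaf R V)"
    obtain a s where a: "a \<in> A" "s \<in> S_open R U" "X = frac R (S_open R U) a s"
      using U(3) unfolding struct_presheaf_def by (rule localization_carrierE)
    obtain b t where b: "b \<in> A" "t \<in> S_open R V" "Y = frac R (S_open R V) b t"
      using V(3) unfolding struct_presheaf_def by (rule localization_carrierE)
    have UV: "openin (zariski R) (U \<inter> V)" "P \<in> U \<inter> V" "U \<subseteq> spec R" "V \<subseteq> spec R"
      using U V openin_zariski_subset by auto
    have st: "s \<in> S_open R (U \<inter> V)" "t \<in> S_open R (U \<inter> V)"
      using a(2) b(2) S_open_antimono[of "U \<inter> V"] by auto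
    have at_P: "loc_rel R (A - P) `` X = frac R (A - P) a s" "loc_rel R (A - P) `` Y = frac R (A - P) b t"
      using a b frac_image[OF multiplicative_S_open SP S_open_subset_compl] UV by auto
    have res: "struct_presheaf_res R U W X = frac R (S_open R W) a s"
      "struct_presheaf_res R V W Y = frac R (S_open R W) b t" if "W \<subseteq> U \<inter> V" for W
      using struct_presheaf_res_frac[OF UV(3) _ a(1,2)] struct_presheaf_res_frac[OF UV(4) _ b(1,2)] a(3) b(3)
        that by auto
    {
      assume "loc_rel R (A - P) `` X = loc_rel R (A - P) `` Y"
      then obtain W where "openin (zariski R) W" "P \<in> W" "W \<subseteq> U \<inter> V"
          "frac R (S_open R W) a s = frac R (S_open R W) b t"
        using frac_eq_near[OF P UV(1,2) a(1) b(1) st] at_P by auto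
      then show "\<exists>W. openin (zariski R) W \<and> P \<in> W \<and> W \<subseteq> U \<inter> V
          \<and> struct_presheaf_res R U W X = struct_presheaf_res R V W Y"
        using res by metis
    next
      assume "psummable (localization R (A - P)) (loc_rel R (A - P) `` X) (loc_rel R (A - P) `` Y)"
      then obtain W where "openin (zariski R) W" "P \<in> W" "W \<subseteq> U \<inter> V"
          "psummable (localization R (S_open R W)) (frac R (S_open R W) a s) (frac R (S_open R W) b t)"
        using frac_summable_near[OF P UV(1,2) a(1) b(1) st] at_P by auto
      then show "\<exists>W. openin (zariski R) W \<and> P \<in> W \<and> W \<subseteq> U \<inter> V
          \<and> psummable (struct_presheaf R W) (struct_presheaf_res R U W X) (struct_presheaf_res R V W Y)"
        using res unfolding struct_presheaf_def by metis
    }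
  next
    fix Z assume "Z \<in> pcarrier (localization R (A - P))"
    then obtain a s where a: "a \<in> A" "s \<in> A - P" "Z = frac R (A - P) a s"
      by (rule localization_carrierE)
    then show "\<exists>U X. openin (zariski R) U \<and> P \<in> U \<and> X \<in> pcarrier (struct_presheaf R U)
        \<and> Z = loc_rel R (A - P) `` X"
      using basic_open_section[OF P a(1,2)] by metis
  qed
qed

end

theorem mainTheorem11:
  fixes R :: "'a pring" and P :: "'a set"
  assumes "partial_ring R"
    and "P \<in> spec R"
  shows "\<exists>f. pring_iso (localization R (pcarrier R - P)) (struct_stalk R P) f"
proof -
  interpret pcring R by (rule pcring.intro) (rule assms(1))
  interpret O': pring_presheaf "zariski R" "struct_presheaf R" "struct_presheaf_res R"
    by (rule struct_presheaf_presheaf)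
  interpret O: pring_presheaf "zariski R" "struct_sheaf R" sheafify_res
    unfolding struct_sheaf_def by (rule O'.sheafify_presheaf)
  have P: "P \<in> topspace (zariski R)" using assms(2) topspace_zariski by simp
  have "pring_iso (struct_stalk R P) (localization R (pcarrier R - P))
      (germ_lift (\<lambda>U X. loc_rel R (pcarrier R - P) `` X) \<circ> germ_lift (\<lambda>U \<sigma>. \<sigma> P))"
    using pring_iso_comp[OF O'.stalk_sheafify_iso[OF P] stalk_struct_presheaf_iso[OF assms(2)]]
    unfolding struct_stalk_def struct_sheaf_def .
  from pring_iso_inv[OF this _ localization_summable_carrier]
  show ?thesis
    using O.stalk_closed[OF P] unfolding struct_stalk_def by blast
qed

end
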